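(* Consider the FIR system $y_t = b_1 u_{t-1} + \dots + b_N u_{t-N} + w_t$ satisfying the assumptions below, and run the following procedure (Algorithm 3). Fix a threshold $c_u$ such that $\mathbb{E}[u \mid u > c_u] \neq \mathbb{E}[u]$ and $\mathbb{E}[u \mid u > c_u] \neq (1-N)\mathbb{E}[u]$, where $u$ has the common distribution of the $u_t$, and step sizes $\alpha_j > 0$ with $\sum_j \alpha_j = \infty$, $\sum_j \alpha_j^2 < \infty$. Let $\tau_1 < \tau_2 < \dots$ be the successive times $t \ge 1$ with $u_t > c_u$, and for $n = 1,\dots,N$ and $i \ge 1$ let $d_{n,i} = \frac{1}{i}\sum_{i'=1}^{i} y_{\tau_{i'} + n}$ (computed by the output quantizer). With $\hat{d}_{n,1} = 0$, define for $j \ge 1$ \[ \hat{d}_{n,j+1} = \hat{d}_{n,j} + \alpha_j\,\mathrm{sgn}\big(d_{n,Nj} - \hat{d}_{n,j}\big), \qquad n = 1,\dots,N, \] (only the binary values $\mathrm{sgn}(d_{n,Nj} - \hat d_{n,j})$ being transmitted to the estimator), and \[ \big[\hat{b}_{1,j},\dots,\hat{b}_{N,j}\big]^T = \mathbf{U}^{-1}\big[\hat{d}_{1,j},\dots,\hat{d}_{N,j}\big]^T, \] where $\mathbf{U}$ is the $N\times N$ matrix with all diagonal entries equal to $\mathbb{E}[u \mid u > c_u]$ and all off-diagonal entries equal to $\mathbb{E}[u]$. Then $\hat{b}_{n,j} \to b_n$ almost surely as $j \to \infty$, for every $n = 1,\dots,N$.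
   Context: Standing assumptions: the input and output quantizers have computational and storage capabilities (they can compute the running averages described, with access to the unquantized $u_t$, $y_t$); $\{u_t\}$ and $\{w_t\}$ are i.i.d. sequences, mutually independent, and $w_t$ has zero mean; the model order $N$ is known; the input distribution is known to the estimator (so $\mathbb{E}[u]$ and $\mathbb{E}[u\mid u>c_u]$, assumed to exist, are known). The function $\mathrm{sgn}$ is defined by $\mathrm{sgn}(x) = -1$ for $x < 0$ and $\mathrm{sgn}(x) = 1$ for $x > 0$ (the paper does not specify a value at $0$). *)

theory Defs
  imports "HOL-Probability.Probability" "HOL-Library.Infinite_Set"
    "Jordan_Normal_Form.Gauss_Jordan_Elimination"
begin

definition cond_exp_above :: "'a measure \<Rightarrow> ('a \<Rightarrow> real) \<Rightarrow> real \<Rightarrow> real" where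
  "cond_exp_above M X c =
     (\<integral>x. X x * indicator {x \<in> space M. X x > c} x \<partial>M) / measure M {x \<in> space M. X x > c}"

definition fir_out :: "(nat \<Rightarrow> real) \<Rightarrow> nat \<Rightarrow> (int \<Rightarrow> 'a \<Rightarrow> real) \<Rightarrow> (int \<Rightarrow> 'a \<Rightarrow> real)
                       \<Rightarrow> int \<Rightarrow> 'a \<Rightarrow> real" where
  "fir_out b N u w t \<omega> = (\<Sum>k=1..N. b k * u (t - int k) \<omega>) + w t \<omega>"

definition tau :: "(int \<Rightarrow> 'a \<Rightarrow> real) \<Rightarrow> real \<Rightarrow> 'a \<Rightarrow> nat \<Rightarrow> int" where
  "tau u c \<omega> i = int (enumerate {t::nat. 1 \<le> t \<and> u (int t) \<omega> > c} (i - 1))"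

definition davg :: "(nat \<Rightarrow> real) \<Rightarrow> nat \<Rightarrow> (int \<Rightarrow> 'a \<Rightarrow> real) \<Rightarrow> (int \<Rightarrow> 'a \<Rightarrow> real)
                    \<Rightarrow> real \<Rightarrow> nat \<Rightarrow> nat \<Rightarrow> 'a \<Rightarrow> real" where
  "davg b N u w c n i \<omega> =
     (1 / real i) * (\<Sum>i'=1..i. fir_out b N u w (tau u c \<omega> i' + int n) \<omega>)"

text \<open>Sign-error recursion: dhat 1 = 0, dhat (j+1) = dhat j + alpha j * sg (D j - dhat j),
  where D j stands for d_{n,Nj}. The value at index 0 is a dummy.\<close>
fun dhat :: "(nat \<Rightarrow> real) \<Rightarrow> (real \<Rightarrow> real) \<Rightarrow> (nat \<Rightarrow> real) \<Rightarrow> nat \<Rightarrow> real" where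
  "dhat \<alpha> sg D 0 = 0"
| "dhat \<alpha> sg D (Suc 0) = 0"
| "dhat \<alpha> sg D (Suc (Suc j)) =
     dhat \<alpha> sg D (Suc j) + \<alpha> (Suc j) * sg (D (Suc j) - dhat \<alpha> sg D (Suc j))"

text \<open>U: N x N matrix, diagonal m1 = E[u | u > c_u], off-diagonal m0 = E[u].\<close>
definition Umat :: "nat \<Rightarrow> real \<Rightarrow> real \<Rightarrow> real mat" where
  "Umat N m0 m1 = mat N N (\<lambda>(i, j). if i = j then m1 else m0)"

text \<open>Estimate vector [bhat_{1,j},...,bhat_{N,j}] = U^{-1} [dhat_{1,j},...,dhat_{N,j}]
  (component n-1 of the JNF vector is bhat_{n,j}).\<close>
definition bhat :: "(nat \<Rightarrow> real) \<Rightarrow> nat \<Rightarrow> (int \<Rightarrow> 'a \<Rightarrow> real) \<Rightarrow> (int \<Rightarrow> 'a \<Rightarrow> real)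
                    \<Rightarrow> real \<Rightarrow> real \<Rightarrow> real \<Rightarrow> (nat \<Rightarrow> real) \<Rightarrow> (real \<Rightarrow> real)
                    \<Rightarrow> nat \<Rightarrow> 'a \<Rightarrow> real vec" where
  "bhat b N u w c m0 m1 \<alpha> sg j \<omega> =
     the (mat_inverse (Umat N m0 m1)) *\<^sub>v
       vec N (\<lambda>k. dhat \<alpha> sg (\<lambda>l. davg b N u w c (k + 1) (N * l) \<omega>) j)"

end

theory Submission
  imports Defs
begin

text \<open>The recursion for dhat is a sign-error stochastic approximation: whenever its input
  d(n, N j) converges, dhat(n, j) converges to the same limit, because the steps alpha j tend to
  zero without being summable. The average d(n, i) of y over the times following the first i
  exceedances u t > c is a ratio of two time averages, of 1[u t > c] y(t + n) and of 1[u t > c].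
  After expanding y, each time average is, along every residue class modulo a suitable period,
  an average of i.i.d. variables; so by the strong law of large numbers d(n, i) tends almost
  surely to (U b) n, the lag k = n contributing E[u | u > c], every other lag E[u], and the noise
  nothing. The two hypotheses on E[u | u > c] make U invertible, hence U^-1 dhat(j) tends to b.
  The strong law itself is proved by Etemadi's argument.\<close>

section \<open>Averages of real sequences\<close>

lemma cesaro_mean_tendsto:
  fixes a :: "nat \<Rightarrow> real"
  assumes "a \<longlonglongrightarrow> L"
  shows "(\<lambda>n. (\<Sum>k<n. a k) / real n) \<longlonglongrightarrow> L"
proof (rule LIMSEQ_I)
  fix r :: real assume r: "r > 0"
  obtain N where N: "\<And>k. k \<ge> N \<Longrightarrow> norm (a k - L) < r/2"
    using LIMSEQ_D[OF assms, of "r/2"] r by auto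
  define C where "C = (\<Sum>k<N. \<bar>a k - L\<bar>)"
  obtain N2 :: nat where N2: "real N2 > 2 * C / r" using reals_Archimedean2 by blast
  show "\<exists>no. \<forall>n\<ge>no. norm ((\<Sum>k<n. a k) / real n - L) < r"
  proof (intro exI allI impI)
    fix n assume n: "n \<ge> max (Suc N) N2"
    then have npos: "real n > 0" by auto
    have "(\<Sum>k<n. a k) / real n - L = (\<Sum>k<n. a k - L) / real n"
      using npos by (simp add: sum_subtractf field_simps)
    moreover have "\<bar>\<Sum>k<n. a k - L\<bar> \<le> C + real n * (r/2)"
    proof -
      have split: "{..<n} = {..<N} \<union> {N..<n}" using n by auto
      have "\<bar>\<Sum>k<n. a k - L\<bar> \<le> (\<Sum>k<n. \<bar>a k - L\<bar>)" by (rule sum_abs)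
      also have "\<dots> = C + (\<Sum>k\<in>{N..<n}. \<bar>a k - L\<bar>)"
        unfolding C_def split by (subst sum.union_disjoint) auto
      also have "(\<Sum>k\<in>{N..<n}. \<bar>a k - L\<bar>) \<le> (\<Sum>k\<in>{N..<n}. r/2)"
        using N by (intro sum_mono) (auto intro: less_imp_le)
      also have "\<dots> \<le> real n * (r/2)" using r by simp
      finally show ?thesis by simp
    qed
    moreover have "C < real n * (r/2)"
    proof -
      have "real N2 \<le> real n" using n by auto
      then have "2*C/r < real n" using N2 by linarith
      then show ?thesis using r by (simp add: field_simps)
    qed
    ultimately show "norm ((\<Sum>k<n. a k) / real n - L) < r"
      using npos by (simp add: abs_divide field_simps)
  qed
qed

lemma term_over_n_tendsto_0_of_cesaro:
  fixes a :: "nat \<Rightarrow> real"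
  assumes "(\<lambda>n. (\<Sum>k<n. a k) / real n) \<longlonglongrightarrow> L"
  shows "(\<lambda>n. a n / real n) \<longlonglongrightarrow> 0"
proof -
  define S where "S n = (\<Sum>k<n. a k)" for n
  have S: "(\<lambda>n. S n / real n) \<longlonglongrightarrow> L" using assms unfolding S_def .
  have "(\<lambda>n. S (Suc n) / real (Suc n) - S n / real n * (real n / real (Suc n))) \<longlonglongrightarrow> L - L * 1"
    by (intro tendsto_diff tendsto_mult LIMSEQ_Suc[OF S] S LIMSEQ_n_over_Suc_n)
  moreover have "S (Suc n) / real (Suc n) - S n / real n * (real n / real (Suc n)) = a n / real (Suc n)" for n
    by (cases "n = 0") (auto simp: S_def add_divide_distrib)
  ultimately have "(\<lambda>n. a n / real (Suc n)) \<longlonglongrightarrow> 0" by simp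
  then have "(\<lambda>n. a n / real (Suc n) * (real (Suc n) / real n)) \<longlonglongrightarrow> 0 * 1"
    by (intro tendsto_mult LIMSEQ_Suc_n_over_n)
  then show ?thesis by (simp del: of_nat_Suc)
qed

lemma tendsto_of_residue_subsequences:
  fixes f :: "nat \<Rightarrow> real"
  assumes L: "L > 0" and H: "\<And>q. q < L \<Longrightarrow> (\<lambda>n. f (L * n + q)) \<longlonglongrightarrow> l"
  shows "f \<longlonglongrightarrow> l"
proof (rule LIMSEQ_I)
  fix e :: real assume e: "e > 0"
  have "\<forall>q\<in>{..<L}. eventually (\<lambda>n. norm (f (L * n + q) - l) < e) sequentially"
    using H e by (auto simp: tendsto_iff dist_norm)
  then have "eventually (\<lambda>n. \<forall>q\<in>{..<L}. norm (f (L * n + q) - l) < e) sequentially"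
    by (intro eventually_ball_finite) auto
  then obtain N where N: "\<And>n q. n \<ge> N \<Longrightarrow> q < L \<Longrightarrow> norm (f (L * n + q) - l) < e"
    unfolding eventually_sequentially by blast
  show "\<exists>no. \<forall>T\<ge>no. norm (f T - l) < e"
  proof (intro exI allI impI)
    fix T assume T: "T \<ge> L * N"
    have "T div L \<ge> N" using div_le_mono[OF T, of L] L by simp
    moreover have "T = L * (T div L) + T mod L" by simp
    moreover have "T mod L < L" using L by simp
    ultimately show "norm (f T - l) < e" using N by metis
  qed
qed

lemma sum_lessThan_add:
  fixes a b :: nat
  shows "(\<Sum>t<a + b. g t) = (\<Sum>t<a. g t) + (\<Sum>j<b. g (a + j))"
  by (induction b) (auto simp: add.commute add.left_commute)

lemma sum_lessThan_mult_by_residues: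
  fixes L n :: nat
  shows "(\<Sum>t<L * n. a t) = (\<Sum>r<L. \<Sum>k<n. a (r + L * k))"
proof (induction n)
  case (Suc n)
  have "(\<Sum>t<L * Suc n. a t) = (\<Sum>t<L * n. a t) + (\<Sum>j<L. a (L * n + j))"
    using sum_lessThan_add[of a "L * n" L] by (simp add: algebra_simps)
  also have "\<dots> = (\<Sum>r<L. \<Sum>k<Suc n. a (r + L * k))"
    using Suc by (simp add: sum.distrib algebra_simps)
  finally show ?case .
qed simp

lemma cesaro_mean_of_residue_classes:
  fixes a :: "nat \<Rightarrow> real"
  assumes L: "L > 0" and H: "\<And>r. r < L \<Longrightarrow> (\<lambda>n. (\<Sum>k<n. a (r + L * k)) / real n) \<longlonglongrightarrow> l"
  shows "(\<lambda>T. (\<Sum>t<T. a t) / real T) \<longlonglongrightarrow> l"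
proof (rule tendsto_of_residue_subsequences[OF L])
  fix q assume q: "q < L"
  have ratio: "(\<lambda>n. real n / real (L * n + q)) \<longlonglongrightarrow> 1 / real L"
  proof -
    have "(\<lambda>n. 1 / (real L + real q / real n)) \<longlonglongrightarrow> 1 / (real L + 0)"
      using L by (intro tendsto_divide tendsto_add tendsto_const tendsto_divide_0[OF tendsto_const]
          filterlim_at_top_imp_at_infinity filterlim_real_sequentially) auto
    moreover have "eventually (\<lambda>n. 1 / (real L + real q / real n) = real n / real (L * n + q)) sequentially"
      unfolding eventually_sequentially by (intro exI[of _ 1]) (auto simp: field_simps)
    ultimately show ?thesis by (simp add: Lim_transform_eventually)
  qed
  have full: "(\<lambda>n. (\<Sum>r<L. (\<Sum>k<n. a (r + L * k)) / real n) * (real n / real (L * n + q)))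
      \<longlonglongrightarrow> (\<Sum>r<L. l) * (1 / real L)"
    by (intro tendsto_mult tendsto_sum H ratio) auto
  have rest: "(\<lambda>n. (\<Sum>j<q. a (j + L * n) / real n) * (real n / real (L * n + q))) \<longlonglongrightarrow> (\<Sum>j<q. 0) * (1 / real L)"
    using q by (intro tendsto_mult tendsto_sum ratio term_over_n_tendsto_0_of_cesaro[OF H]) auto
  have "eventually (\<lambda>n. (\<Sum>r<L. (\<Sum>k<n. a (r + L * k)) / real n) * (real n / real (L * n + q))
      + (\<Sum>j<q. a (j + L * n) / real n) * (real n / real (L * n + q)) = (\<Sum>t<L * n + q. a t) / real (L * n + q)) sequentially"
  proof (rule eventually_sequentiallyI[of 1])
    fix n :: nat assume "n \<ge> 1"
    then have "(\<Sum>r<L. (\<Sum>k<n. a (r + L * k)) / real n) * (real n / real (L * n + q))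
      + (\<Sum>j<q. a (j + L * n) / real n) * (real n / real (L * n + q))
      = ((\<Sum>r<L. \<Sum>k<n. a (r + L * k)) + (\<Sum>j<q. a (L * n + j))) / real (L * n + q)"
      by (simp add: sum_divide_distrib[symmetric] add_divide_distrib add.commute)
    then show "(\<Sum>r<L. (\<Sum>k<n. a (r + L * k)) / real n) * (real n / real (L * n + q))
      + (\<Sum>j<q. a (j + L * n) / real n) * (real n / real (L * n + q)) = (\<Sum>t<L * n + q. a t) / real (L * n + q)"
      by (simp only: sum_lessThan_add sum_lessThan_mult_by_residues)
  qed
  with tendsto_add[OF full rest] L show "(\<lambda>n. (\<Sum>t<L * n + q. a t) / real (L * n + q)) \<longlonglongrightarrow> l"
    by (simp add: Lim_transform_eventually)
qed

lemma mono_average_bracket: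
  fixes s :: "nat \<Rightarrow> real"
  assumes mono: "mono s" and s0: "\<And>n. s n \<ge> 0" and k: "0 < k" "k \<le> m" "m < k'"
  shows "s k / real k' \<le> s m / real m" and "s m / real m \<le> s k' / real k"
proof -
  have "s k / real k' \<le> s k / real m" using k s0[of k] by (intro divide_left_mono) auto
  also have "\<dots> \<le> s m / real m" using mono k by (auto simp: mono_def intro: divide_right_mono)
  finally show "s k / real k' \<le> s m / real m" .
  have "s m / real m \<le> s k' / real m" using mono k by (auto simp: mono_def intro: divide_right_mono)
  also have "\<dots> \<le> s k' / real k" using k s0[of k'] by (intro divide_left_mono) auto
  finally show "s m / real m \<le> s k' / real k" .
qed

lemma bracketing_index:
  fixes kk :: "nat \<Rightarrow> nat"
  assumes lim: "filterlim kk at_top sequentially" and m: "kk N0 \<le> m"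
  shows "\<exists>n\<ge>N0. kk n \<le> m \<and> m < kk (Suc n)"
proof (rule ccontr)
  assume none: "\<not> ?thesis"
  have "kk n \<le> m" if "n \<ge> N0" for n
    using that
  proof (induction n rule: dec_induct)
    case (step n)
    then show ?case using none by force
  qed (fact m)
  moreover obtain K where "\<And>n. n \<ge> K \<Longrightarrow> kk n \<ge> Suc m"
    using lim unfolding filterlim_at_top eventually_sequentially by blast
  ultimately have "Suc m \<le> m" by (meson le_trans max.cobounded1 max.cobounded2)
  then show False by simp
qed

lemma mono_average_eventually_bounds:
  fixes s :: "nat \<Rightarrow> real" and kk :: "nat \<Rightarrow> nat"
  assumes mono: "mono s" and s0: "\<And>n. s n \<ge> 0"
    and kk: "filterlim kk at_top sequentially" "\<And>n. kk n > 0"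
    and ratio: "(\<lambda>n. real (kk (Suc n)) / real (kk n)) \<longlonglongrightarrow> \<beta>" and \<beta>: "\<beta> > 0"
    and avg: "(\<lambda>n. s (kk n) / real (kk n)) \<longlonglongrightarrow> \<mu>" and e: "e > 0"
  shows "eventually (\<lambda>m. \<mu> / \<beta> - e < s m / real m \<and> s m / real m < \<mu> * \<beta> + e) sequentially"
proof -
  have "(\<lambda>n. s (kk n) / real (kk n) / (real (kk (Suc n)) / real (kk n))) \<longlonglongrightarrow> \<mu> / \<beta>"
    using \<beta> by (intro tendsto_divide ratio avg) auto
  then have "(\<lambda>n. s (kk n) / real (kk (Suc n))) \<longlonglongrightarrow> \<mu> / \<beta>"
    using kk(2) by simp
  then have lower: "eventually (\<lambda>n. \<mu> / \<beta> - e < s (kk n) / real (kk (Suc n))) sequentially"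
    by (rule order_tendstoD(1)) (use e in simp)
  have "(\<lambda>n. s (kk (Suc n)) / real (kk (Suc n)) * (real (kk (Suc n)) / real (kk n))) \<longlonglongrightarrow> \<mu> * \<beta>"
    by (intro tendsto_mult ratio LIMSEQ_Suc[OF avg])
  then have "(\<lambda>n. s (kk (Suc n)) / real (kk n)) \<longlonglongrightarrow> \<mu> * \<beta>"
    using kk(2) by (simp add: less_imp_neq[symmetric])
  then have upper: "eventually (\<lambda>n. s (kk (Suc n)) / real (kk n) < \<mu> * \<beta> + e) sequentially"
    by (rule order_tendstoD(2)) (use e in simp)
  from eventually_conj[OF lower upper] obtain N0 where N0: "\<And>n. n \<ge> N0 \<Longrightarrow> \<mu> / \<beta> - e < s (kk n) / real (kk (Suc n))
      \<and> s (kk (Suc n)) / real (kk n) < \<mu> * \<beta> + e"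
    unfolding eventually_sequentially by blast
  show ?thesis
  proof (rule eventually_sequentiallyI)
    fix m assume "kk N0 \<le> m"
    then obtain n where n: "n \<ge> N0" "kk n \<le> m" "m < kk (Suc n)"
      using bracketing_index[OF kk(1)] by blast
    then have "s (kk n) / real (kk (Suc n)) \<le> s m / real m" "s m / real m \<le> s (kk (Suc n)) / real (kk n)"
      using mono_average_bracket[OF mono s0 kk(2)] by auto
    with N0[OF n(1)] show "\<mu> / \<beta> - e < s m / real m \<and> s m / real m < \<mu> * \<beta> + e"
      by linarith
  qed
qed

lemma mono_average_tendsto_of_geometric_subsequences:
  fixes s :: "nat \<Rightarrow> real" and \<mu> :: real
  assumes mono: "mono s" and s0: "\<And>n. s n \<ge> 0" and \<mu>: "\<mu> \<ge> 0"
    and H: "\<And>j::nat. \<exists>kk::nat\<Rightarrow>nat. filterlim kk at_top sequentially \<and> (\<forall>n. kk n > 0) \<and>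
              (\<lambda>n. real (kk (Suc n)) / real (kk n)) \<longlonglongrightarrow> 1 + 1 / real (Suc j) \<and>
              (\<lambda>n. s (kk n) / real (kk n)) \<longlonglongrightarrow> \<mu>"
  shows "(\<lambda>n. s n / real n) \<longlonglongrightarrow> \<mu>"
proof (rule tendstoI)
  fix e :: real assume e: "e > 0"
  have "e / (2 * (\<mu> + 1)) > 0" using e \<mu> by simp
  then obtain j :: nat where j: "inverse (real (Suc j)) < e / (2 * (\<mu> + 1))"
    using reals_Archimedean by blast
  define \<beta> where "\<beta> = 1 + 1 / real (Suc j)"
  have \<beta>1: "\<beta> > 1" unfolding \<beta>_def by simp
  have "\<mu> * (\<beta> - 1) \<le> \<mu> * (e / (2 * (\<mu> + 1)))"
    using j \<mu> unfolding \<beta>_def by (intro mult_left_mono) (auto simp: inverse_eq_divide)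
  also have "\<dots> \<le> e / 2" using \<mu> e by (simp add: field_simps)
  finally have close: "\<mu> * (\<beta> - 1) \<le> e / 2" .
  have "\<mu> - \<mu> / \<beta> = \<mu> * (\<beta> - 1) / \<beta>" using \<beta>1 by (simp add: field_simps)
  also have "\<dots> \<le> \<mu> * (\<beta> - 1)" using \<beta>1 \<mu> by (simp add: divide_le_eq mult_le_cancel_left1 not_less)
  finally have "\<mu> - e / 2 \<le> \<mu> / \<beta>" using close by linarith
  moreover have "\<mu> * \<beta> \<le> \<mu> + e / 2" using close by (simp add: algebra_simps)
  moreover obtain kk :: "nat \<Rightarrow> nat" where "filterlim kk at_top sequentially" "\<And>n. kk n > 0"
    "(\<lambda>n. real (kk (Suc n)) / real (kk n)) \<longlonglongrightarrow> \<beta>" "(\<lambda>n. s (kk n) / real (kk n)) \<longlonglongrightarrow> \<mu>"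
    using H[of j] unfolding \<beta>_def by blast
  then have "eventually (\<lambda>m. \<mu> / \<beta> - e / 2 < s m / real m \<and> s m / real m < \<mu> * \<beta> + e / 2) sequentially"
    using \<beta>1 e by (intro mono_average_eventually_bounds[OF mono s0]) auto
  ultimately show "eventually (\<lambda>m. dist (s m / real m) \<mu> < e) sequentially"
    by (elim eventually_mono) (auto simp: dist_real_def abs_less_iff)
qed

section \<open>The sign-error recursion\<close>

lemma summable_of_eventually_decreasing_bounded_below:
  fixes x a :: "nat \<Rightarrow> real"
  assumes "\<And>n. n \<ge> N \<Longrightarrow> x (Suc n) = x n - a n" "\<And>n. n \<ge> N \<Longrightarrow> a n \<ge> 0"
    and "\<And>n. n \<ge> N \<Longrightarrow> x n \<ge> c"
  shows "summable a"
proof -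
  have telescope: "x (N + k) = x N - (\<Sum>i<k. a (i + N))" for k
    by (induction k) (auto simp: assms(1) add.commute)
  have "summable (\<lambda>i. a (i + N))"
  proof (rule summableI_nonneg_bounded)
    show "0 \<le> a (i + N)" for i using assms(2) by simp
    show "(\<Sum>i<n. a (i + N)) \<le> x N - c" for n using telescope[of n] assms(3)[of "N + n"] by simp
  qed
  then show ?thesis by simp
qed

text \<open>The recursion moves \<open>x\<close> towards \<open>E\<close> by at most the step \<open>a n\<close>; since the steps are not
  summable, \<open>x\<close> cannot stay above the eventual range of \<open>E\<close>, and once below it can overshoot
  by less than one step.\<close>

lemma sign_recursion_eventually_le:
  fixes x a E :: "nat \<Rightarrow> real" and sg :: "real \<Rightarrow> real"
  assumes rec: "\<And>n. n \<ge> N \<Longrightarrow> x (Suc n) = x n + a n * sg (E n - x n)"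
    and pos: "\<And>n. n \<ge> N \<Longrightarrow> a n > 0" and ns: "\<not> summable a"
    and neg: "\<And>z. z < 0 \<Longrightarrow> sg z = -1"
    and E: "\<And>n. n \<ge> N \<Longrightarrow> E n < d" and small: "\<And>n z. n \<ge> N \<Longrightarrow> \<bar>a n * sg z\<bar> < r"
  shows "eventually (\<lambda>n. x n \<le> d + r) sequentially"
proof -
  have down: "x (Suc n) = x n - a n" if "n \<ge> N" "E n < x n" for n
    using rec[OF that(1)] neg[of "E n - x n"] that(2) by simp
  have "\<exists>m\<ge>N. x m \<le> d"
  proof (rule ccontr)
    assume "\<not> (\<exists>m\<ge>N. x m \<le> d)"
    then have above: "\<And>n. n \<ge> N \<Longrightarrow> x n > d" by force
    have "summable a"
      by (rule summable_of_eventually_decreasing_bounded_below[where N=N and x=x and c=d])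
        (use above down E pos in \<open>force intro: less_imp_le\<close>)+
    with ns show False ..
  qed
  then obtain m where m: "m \<ge> N" "x m \<le> d" by blast
  have "x n \<le> d + r" if "n \<ge> m" for n
    using that
  proof (induction n rule: dec_induct)
    case base
    then show ?case using m small[of m 0] by linarith
  next
    case (step n)
    with m have n: "n \<ge> N" by simp
    show ?case
    proof (cases "E n < x n")
      case True
      then show ?thesis using down[OF n True] pos[OF n] step.IH by simp
    next
      case False
      then show ?thesis using rec[OF n] E[OF n] small[OF n, of "E n - x n"] by linarith
    qed
  qed
  then show ?thesis unfolding eventually_sequentially by blast
qed

lemma sign_recursion_tendsto:
  fixes x a E :: "nat \<Rightarrow> real" and sg :: "real \<Rightarrow> real"
  assumes rec: "\<And>n. n \<ge> N \<Longrightarrow> x (Suc n) = x n + a n * sg (E n - x n)"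
    and pos: "\<And>n. n \<ge> N \<Longrightarrow> a n > 0" and ns: "\<not> summable a" and a0: "a \<longlonglongrightarrow> 0"
    and E: "E \<longlonglongrightarrow> d"
    and neg: "\<And>z. z < 0 \<Longrightarrow> sg z = -1" and posv: "\<And>z. z > 0 \<Longrightarrow> sg z = 1"
  shows "x \<longlonglongrightarrow> d"
proof (rule tendstoI)
  fix e :: real assume e: "e > 0"
  define K where "K = max 1 \<bar>sg 0\<bar>"
  have K: "\<bar>sg z\<bar> \<le> K" for z
    unfolding K_def using neg posv by (cases z "0::real" rule: linorder_cases) auto
  have K1: "K \<ge> 1" unfolding K_def by simp
  define r where "r = e/3"
  have r: "r > 0" unfolding r_def using e by simp
  have "\<forall>\<^sub>F n in sequentially. n \<ge> N \<and> dist (E n) d < r \<and> dist (a n) 0 < r / K"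
    using eventually_ge_at_top[of N] tendstoD[OF E r] tendstoD[OF a0, of "r / K"] r K1
    by (auto intro: eventually_conj)
  then obtain N' where N': "\<And>n. n \<ge> N' \<Longrightarrow> n \<ge> N \<and> \<bar>E n - d\<bar> < r \<and> \<bar>a n\<bar> < r / K"
    unfolding eventually_sequentially dist_real_def by auto
  have later: "n \<ge> N" if "n \<ge> N'" for n
    using N'[OF that] by simp
  have close: "E n < d + r" "- E n < r - d" if "n \<ge> N'" for n
    using N'[OF that] abs_less_iff[of "E n - d"] by linarith+
  have step: "\<bar>a n * sg z\<bar> < r" if "n \<ge> N'" for n z
  proof -
    have "\<bar>a n * sg z\<bar> \<le> \<bar>a n\<bar> * K" by (simp add: abs_mult K mult_left_mono)
    also have "\<dots> < r / K * K" using N'[OF that] K1 by (intro mult_strict_right_mono) auto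
    finally show ?thesis using K1 by simp
  qed
  have upper: "eventually (\<lambda>n. x n \<le> (d + r) + r) sequentially"
    by (rule sign_recursion_eventually_le[where N=N' and a=a and E=E and sg=sg])
      (simp_all add: rec[OF later] pos[OF later] ns neg step close)
  have lower: "eventually (\<lambda>n. - x n \<le> (- d + r) + r) sequentially"
    by (rule sign_recursion_eventually_le[where N=N' and a=a and E="\<lambda>n. - E n" and sg="\<lambda>z. - sg (- z)"])
      (simp_all add: rec[OF later] pos[OF later] ns posv step close)
  show "eventually (\<lambda>n. dist (x n) d < e) sequentially"
    using upper lower by eventually_elim (use r in \<open>auto simp: r_def dist_real_def abs_less_iff\<close>)
qed

lemma dhat_tendsto:
  fixes D \<alpha> :: "nat \<Rightarrow> real" and sg :: "real \<Rightarrow> real"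
  assumes "D \<longlonglongrightarrow> d" "\<alpha> \<longlonglongrightarrow> 0" "\<And>j. j \<ge> 1 \<Longrightarrow> \<alpha> j > 0" "\<not> summable \<alpha>"
    and "\<And>x. x < 0 \<Longrightarrow> sg x = -1" "\<And>x. x > 0 \<Longrightarrow> sg x = 1"
  shows "(\<lambda>j. dhat \<alpha> sg D j) \<longlonglongrightarrow> d"
proof (rule sign_recursion_tendsto[where N=1 and a=\<alpha> and E=D and sg=sg])
  show "dhat \<alpha> sg D (Suc n) = dhat \<alpha> sg D n + \<alpha> n * sg (D n - dhat \<alpha> sg D n)" if "n \<ge> 1" for n
    using that by (cases n) auto
qed (use assms in auto)

lemma tendsto_0_of_summable_power2:
  fixes \<alpha> :: "nat \<Rightarrow> real"
  assumes "summable (\<lambda>j. (\<alpha> j)\<^sup>2)"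
  shows "\<alpha> \<longlonglongrightarrow> 0"
proof -
  have "(\<lambda>j. sqrt ((\<alpha> j)\<^sup>2)) \<longlonglongrightarrow> sqrt 0"
    by (intro tendsto_real_sqrt summable_LIMSEQ_zero[OF assms])
  then show ?thesis by (simp add: tendsto_rabs_zero_iff)
qed

section \<open>The strong law of large numbers\<close>

definition floor_pow :: "real \<Rightarrow> nat \<Rightarrow> nat" where "floor_pow \<beta> n = nat \<lfloor>\<beta> ^ n\<rfloor>"

lemma floor_pow_bounds:
  assumes b: "\<beta> > 1"
  shows "real (floor_pow \<beta> n) \<le> \<beta> ^ n" "real (floor_pow \<beta> n) > \<beta> ^ n - 1" "real (floor_pow \<beta> n) \<ge> \<beta> ^ n / 2" "floor_pow \<beta> n \<ge> 1"
proof -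
  have p1: "\<beta> ^ n \<ge> 1" using b by (simp add: one_le_power)
  have fl: "real_of_int \<lfloor>\<beta> ^ n\<rfloor> \<ge> 1" using p1 by simp
  have e: "real (floor_pow \<beta> n) = real_of_int \<lfloor>\<beta> ^ n\<rfloor>" unfolding floor_pow_def using fl by simp
  show "real (floor_pow \<beta> n) \<le> \<beta> ^ n" unfolding e by simp
  show "real (floor_pow \<beta> n) > \<beta> ^ n - 1" unfolding e by linarith
  show "real (floor_pow \<beta> n) \<ge> \<beta> ^ n / 2" unfolding e using fl by linarith
  have "real (floor_pow \<beta> n) \<ge> 1" using e fl by simp
  then show "floor_pow \<beta> n \<ge> 1" by simp
qed

lemma filterlim_floor_pow:
  assumes b: "\<beta> > 1"
  shows "filterlim (floor_pow \<beta>) at_top sequentially"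
  unfolding filterlim_at_top eventually_sequentially
proof (intro allI)
  fix Z :: nat
  obtain n0 where n0: "real Z + 1 < \<beta> ^ n0" using real_arch_pow[OF b] by blast
  show "\<exists>N. \<forall>n\<ge>N. Z \<le> floor_pow \<beta> n"
  proof (intro exI allI impI)
    fix n assume "n \<ge> n0"
    then have "\<beta> ^ n0 \<le> \<beta> ^ n" using b by (intro power_increasing) auto
    then show "Z \<le> floor_pow \<beta> n" using floor_pow_bounds(2)[OF b, of n] n0 by linarith
  qed
qed

lemma floor_pow_ratio_tendsto:
  assumes b: "\<beta> > 1"
  shows "(\<lambda>n. real (floor_pow \<beta> (Suc n)) / real (floor_pow \<beta> n)) \<longlonglongrightarrow> \<beta>"
proof -
  define r where "r n = real (floor_pow \<beta> n) / \<beta> ^ n" for n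
  have bp: "\<beta> ^ n > 0" for n using b by simp
  have r1: "r \<longlonglongrightarrow> 1"
  proof (rule tendsto_sandwich[where f="\<lambda>n. 1 - inverse (\<beta> ^ n)" and h="\<lambda>n. 1"])
    show "eventually (\<lambda>n. 1 - inverse (\<beta> ^ n) \<le> r n) sequentially"
    proof (intro always_eventually allI)
      fix n
      have "1 - inverse (\<beta> ^ n) = (\<beta> ^ n - 1) / \<beta> ^ n" using bp[of n] b by (simp add: diff_divide_distrib inverse_eq_divide)
      also have "\<dots> \<le> r n" unfolding r_def using floor_pow_bounds(2)[OF b, of n] bp[of n]
        by (intro divide_right_mono) auto
      finally show "1 - inverse (\<beta> ^ n) \<le> r n" .
    qed
    show "eventually (\<lambda>n. r n \<le> 1) sequentially"
      unfolding r_def using floor_pow_bounds(1)[OF b] bp b by (intro always_eventually allI) (simp add: divide_le_eq)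
    show "(\<lambda>n. 1 - inverse (\<beta> ^ n)) \<longlonglongrightarrow> 1"
      using tendsto_diff[OF tendsto_const LIMSEQ_inverse_realpow_zero[OF b], of 1] by simp
  qed simp
  have "(\<lambda>n. \<beta> * r (Suc n) / r n) \<longlonglongrightarrow> \<beta> * 1 / 1"
    by (intro tendsto_divide tendsto_mult tendsto_const LIMSEQ_Suc[OF r1] r1) simp
  moreover have "\<beta> * r (Suc n) / r n = real (floor_pow \<beta> (Suc n)) / real (floor_pow \<beta> n)" for n
    using bp[of n] floor_pow_bounds(4)[OF b, of n] b unfolding r_def by (simp add: field_simps)
  ultimately show ?thesis by simp
qed

lemma sum_shifted_geometric:
  fixes r :: real
  assumes "r \<noteq> 1"
  shows "(\<Sum>n<N. if n0 \<le> n then r ^ (n - n0) else 0) = (1 - r ^ (N - n0)) / (1 - r)"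
proof (induction N)
  case 0 then show ?case by simp
next
  case (Suc N)
  show ?case
  proof (cases "n0 \<le> N")
    case True
    then have e: "Suc N - n0 = Suc (N - n0)" by simp
    have a: "(1 - r ^ k) / (1 - r) + r ^ k = (1 - r * r ^ k) / (1 - r)" for k
      using assms by (simp add: field_simps)
    show ?thesis using Suc True a unfolding e by simp
  next
    case False
    then show ?thesis using Suc by simp
  qed
qed

lemma sum_inverse_powers_above_le:
  fixes x \<beta> :: real
  assumes x: "x > 0" and b: "\<beta> > 1"
  shows "(\<Sum>n<N. if x \<le> \<beta> ^ n then 1 / \<beta> ^ n else 0) \<le> \<beta> / (\<beta> - 1) / x"
proof -
  obtain m where m: "x < \<beta> ^ m" using real_arch_pow[OF b] by blast
  define n0 where "n0 = (LEAST n. x \<le> \<beta> ^ n)"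
  have n0: "x \<le> \<beta> ^ n0" unfolding n0_def by (rule LeastI[of _ m]) (use m in simp)
  define r where "r = 1 / \<beta>"
  have r: "0 < r" "r < 1" unfolding r_def using b by auto
  have trm: "(if x \<le> \<beta> ^ n then 1 / \<beta> ^ n else 0) \<le> (1/x) * (if n0 \<le> n then r ^ (n - n0) else 0)" for n
  proof (cases "x \<le> \<beta> ^ n")
    case True
    then have nn0: "n0 \<le> n" unfolding n0_def by (rule Least_le)
    have "\<beta> ^ n = \<beta> ^ n0 * \<beta> ^ (n - n0)" using nn0 by (simp flip: power_add)
    then have "1 / \<beta> ^ n = (1 / \<beta> ^ n0) * r ^ (n - n0)" unfolding r_def by (simp add: power_one_over)
    also have "\<dots> \<le> (1/x) * r ^ (n - n0)"
      using n0 x r by (intro mult_right_mono divide_left_mono) auto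
    finally show ?thesis using True nn0 by simp
  qed (use x r in simp)
  have "(\<Sum>n<N. if x \<le> \<beta> ^ n then 1 / \<beta> ^ n else 0) \<le> (\<Sum>n<N. (1/x) * (if n0 \<le> n then r ^ (n - n0) else 0))"
    by (intro sum_mono trm)
  also have "\<dots> = (1/x) * (\<Sum>n<N. if n0 \<le> n then r ^ (n - n0) else 0)"
    by (rule sum_distrib_left[symmetric])
  also have "\<dots> = (1/x) * ((1 - r ^ (N - n0)) / (1 - r))"
    by (subst sum_shifted_geometric) (use r in auto)
  also have "\<dots> \<le> (1/x) * (1 / (1 - r))"
    using r x by (intro mult_left_mono divide_right_mono) auto
  also have "\<dots> = \<beta> / (\<beta> - 1) / x" unfolding r_def using b by (simp add: field_simps)
  finally show ?thesis .
qed

lemma sum_truncated_square_over_floor_pow_le: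
  fixes x \<beta> :: real
  assumes x: "x \<ge> 0" and b: "\<beta> > 1"
  shows "(\<Sum>n<N. (if x \<le> real (floor_pow \<beta> n) then x\<^sup>2 else 0) / real (floor_pow \<beta> n)) \<le> 2 * \<beta> / (\<beta> - 1) * x"
proof (cases "x = 0")
  case True then show ?thesis by simp
next
  case False
  then have x0: "x > 0" using x by simp
  have "(\<Sum>n<N. (if x \<le> real (floor_pow \<beta> n) then x\<^sup>2 else 0) / real (floor_pow \<beta> n))
      \<le> (\<Sum>n<N. 2 * x\<^sup>2 * (if x \<le> \<beta> ^ n then 1 / \<beta> ^ n else 0))"
  proof (rule sum_mono)
    fix n
    have k1: "real (floor_pow \<beta> n) \<ge> \<beta> ^ n / 2" "real (floor_pow \<beta> n) \<le> \<beta> ^ n" "real (floor_pow \<beta> n) > 0"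
      using floor_pow_bounds[OF b, of n] by auto
    show "(if x \<le> real (floor_pow \<beta> n) then x\<^sup>2 else 0) / real (floor_pow \<beta> n) \<le> 2 * x\<^sup>2 * (if x \<le> \<beta> ^ n then 1 / \<beta> ^ n else 0)"
    proof (cases "x \<le> real (floor_pow \<beta> n)")
      case True
      then have xb: "x \<le> \<beta> ^ n" using k1 by simp
      have "x\<^sup>2 / real (floor_pow \<beta> n) \<le> x\<^sup>2 / (\<beta> ^ n / 2)"
        using k1 b by (intro divide_left_mono) auto
      moreover have "x\<^sup>2 / (\<beta> ^ n / 2) = 2 * x\<^sup>2 * (1 / \<beta> ^ n)" by simp
      ultimately show ?thesis using True xb by (simp add: mult.commute)
    qed (use k1 in simp)
  qed
  also have "\<dots> = 2 * x\<^sup>2 * (\<Sum>n<N. if x \<le> \<beta> ^ n then 1 / \<beta> ^ n else 0)"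
    by (simp add: sum_distrib_left)
  also have "\<dots> \<le> 2 * x\<^sup>2 * (\<beta> / (\<beta> - 1) / x)"
    by (intro mult_left_mono sum_inverse_powers_above_le x0 b) auto
  also have "\<dots> = 2 * \<beta> / (\<beta> - 1) * x" using x0 b by (simp add: power2_eq_square field_simps)
  finally show ?thesis .
qed

lemma distr_eq_imp_integral_eq:
  fixes g :: "'b \<Rightarrow> real"
  assumes eq: "distr M N X = distr M N Y"
    and [measurable]: "X \<in> measurable M N" "Y \<in> measurable M N" "g \<in> borel_measurable N"
  shows "(\<integral>\<omega>. g (X \<omega>) \<partial>M) = (\<integral>\<omega>. g (Y \<omega>) \<partial>M)"
    and "integrable M (\<lambda>\<omega>. g (X \<omega>)) \<longleftrightarrow> integrable M (\<lambda>\<omega>. g (Y \<omega>))"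
proof -
  show "(\<integral>\<omega>. g (X \<omega>) \<partial>M) = (\<integral>\<omega>. g (Y \<omega>) \<partial>M)"
    using integral_distr[of X M N g] integral_distr[of Y M N g] eq by simp
  show "integrable M (\<lambda>\<omega>. g (X \<omega>)) \<longleftrightarrow> integrable M (\<lambda>\<omega>. g (Y \<omega>))"
    using integrable_distr_eq[of X M N g] integrable_distr_eq[of Y M N g] eq by simp
qed

lemma distr_eq_imp_distr_compose_eq:
  assumes eq: "distr M N X = distr M N Y"
    and [measurable]: "X \<in> measurable M N" "Y \<in> measurable M N" "f \<in> measurable N K"
  shows "distr M K (\<lambda>\<omega>. f (X \<omega>)) = distr M K (\<lambda>\<omega>. f (Y \<omega>))"
proof -
  have "distr M K (\<lambda>\<omega>. f (X \<omega>)) = distr (distr M N X) K f"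
    by (subst distr_distr) (auto simp: comp_def)
  also have "\<dots> = distr M K (\<lambda>\<omega>. f (Y \<omega>))"
    unfolding eq by (subst distr_distr) (auto simp: comp_def)
  finally show ?thesis .
qed

lemma (in prob_space) indep_vars_pair:
  assumes "indep_vars M' X I" "i \<in> I" "j \<in> I" "i \<noteq> j"
  shows "indep_var (M' i) (X i) (M' j) (X j)"
proof -
  have "indep_var (M' i) ((\<lambda>f. f i) \<circ> (\<lambda>\<omega>. restrict (\<lambda>k. X k \<omega>) {i}))
                  (M' j) ((\<lambda>f. f j) \<circ> (\<lambda>\<omega>. restrict (\<lambda>k. X k \<omega>) {j}))"
    using assms by (intro indep_var_compose[OF indep_var_restrict[OF assms(1)]])
       (auto intro!: measurable_component_singleton)
  also have "((\<lambda>f. f i) \<circ> (\<lambda>\<omega>. restrict (\<lambda>k. X k \<omega>) {i})) = X i" by auto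
  also have "((\<lambda>f. f j) \<circ> (\<lambda>\<omega>. restrict (\<lambda>k. X k \<omega>) {j})) = X j" by auto
  finally show ?thesis .
qed

lemma (in prob_space) AE_tendsto_0_of_summable_second_moments:
  fixes Z :: "nat \<Rightarrow> 'a \<Rightarrow> real"
  assumes [measurable]: "\<And>n. Z n \<in> borel_measurable M"
    and int: "\<And>n. integrable M (\<lambda>\<omega>. (Z n \<omega>)\<^sup>2)"
    and sum: "summable (\<lambda>n. expectation (\<lambda>\<omega>. (Z n \<omega>)\<^sup>2))"
  shows "AE \<omega> in M. (\<lambda>n. Z n \<omega>) \<longlonglongrightarrow> 0"
proof -
  have "(\<integral>\<^sup>+\<omega>. (\<Sum>n. ennreal ((Z n \<omega>)\<^sup>2)) \<partial>M) = (\<Sum>n. \<integral>\<^sup>+\<omega>. ennreal ((Z n \<omega>)\<^sup>2) \<partial>M)"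
    by (rule nn_integral_suminf) auto
  also have "\<dots> = (\<Sum>n. ennreal (expectation (\<lambda>\<omega>. (Z n \<omega>)\<^sup>2)))"
    using int by (subst nn_integral_eq_integral) auto
  also have "\<dots> = ennreal (\<Sum>n. expectation (\<lambda>\<omega>. (Z n \<omega>)\<^sup>2))"
    using sum by (intro suminf_ennreal2) auto
  finally have "(\<integral>\<^sup>+\<omega>. (\<Sum>n. ennreal ((Z n \<omega>)\<^sup>2)) \<partial>M) \<noteq> \<infinity>" by simp
  then have "AE \<omega> in M. (\<Sum>n. ennreal ((Z n \<omega>)\<^sup>2)) \<noteq> \<infinity>"
    by (intro nn_integral_noteq_infinite) measurable
  then show ?thesis
  proof (rule AE_mp[OF _ AE_I2], intro impI)
    fix \<omega> assume "(\<Sum>n. ennreal ((Z n \<omega>)\<^sup>2)) \<noteq> \<infinity>"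
    then have "summable (\<lambda>n. (Z n \<omega>)\<^sup>2)"
      by (intro summable_suminf_not_top) auto
    then show "(\<lambda>n. Z n \<omega>) \<longlonglongrightarrow> 0"
      by (rule tendsto_0_of_summable_power2)
  qed
qed

lemma (in prob_space) expectation_square_sum_indep:
  fixes Z :: "nat \<Rightarrow> 'a \<Rightarrow> real"
  assumes [measurable]: "\<And>j. Z j \<in> borel_measurable M"
    and bounded: "\<And>j \<omega>. \<bar>Z j \<omega>\<bar> \<le> B j"
    and indep: "\<And>j l. j \<noteq> l \<Longrightarrow> indep_var borel (Z j) borel (Z l)"
    and centered: "\<And>j. expectation (Z j) = 0"
  shows "expectation (\<lambda>\<omega>. (\<Sum>j<m. Z j \<omega>)\<^sup>2) = (\<Sum>j<m. expectation (\<lambda>\<omega>. (Z j \<omega>)\<^sup>2))"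
proof -
  have Z_int: "integrable M (Z j)" for j
    using bounded by (intro integrable_const_bound AE_I2) auto
  have ZZ_int: "integrable M (\<lambda>\<omega>. Z j \<omega> * Z l \<omega>)" for j l
  proof (rule integrable_const_bound[where B="B j * B l"])
    show "AE \<omega> in M. norm (Z j \<omega> * Z l \<omega>) \<le> B j * B l"
      unfolding real_norm_def abs_mult using bounded
      by (intro AE_I2 mult_mono) (auto intro: order_trans[OF abs_ge_zero])
  qed auto
  have cross: "expectation (\<lambda>\<omega>. Z j \<omega> * Z l \<omega>) = (if j = l then expectation (\<lambda>\<omega>. (Z j \<omega>)\<^sup>2) else 0)" for j l
    using indep_var_lebesgue_integral[OF indep Z_int Z_int] centered by (simp add: power2_eq_square)
  have "expectation (\<lambda>\<omega>. (\<Sum>j<m. Z j \<omega>)\<^sup>2) = expectation (\<lambda>\<omega>. \<Sum>j<m. \<Sum>l<m. Z j \<omega> * Z l \<omega>)"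
    unfolding power2_eq_square sum_product ..
  also have "\<dots> = (\<Sum>j<m. \<Sum>l<m. expectation (\<lambda>\<omega>. Z j \<omega> * Z l \<omega>))"
    using ZZ_int by (simp add: Bochner_Integration.integral_sum Bochner_Integration.integrable_sum)
  also have "\<dots> = (\<Sum>j<m. expectation (\<lambda>\<omega>. (Z j \<omega>)\<^sup>2))"
    unfolding cross by (simp add: sum.delta)
  finally show ?thesis .
qed

locale iid_seq = prob_space +
  fixes X :: "nat \<Rightarrow> 'a \<Rightarrow> real"
  assumes indep: "indep_vars (\<lambda>_. borel) X UNIV"
    and distr_eq: "\<And>k. distr M borel (X k) = distr M borel (X 0)"
    and integrable_X0: "integrable M (X 0)"
begin

lemma measurable_X[measurable]: "X k \<in> borel_measurable M"
  using indep unfolding indep_vars_def by auto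

lemma integral_compose_X:
  fixes g :: "real \<Rightarrow> real"
  assumes [measurable]: "g \<in> borel_measurable borel"
  shows "(\<integral>\<omega>. g (X k \<omega>) \<partial>M) = (\<integral>\<omega>. g (X 0 \<omega>) \<partial>M)"
  by (rule distr_eq_imp_integral_eq[OF distr_eq]) auto

lemma indep_var_X: "i \<noteq> j \<Longrightarrow> indep_var borel (X i) borel (X j)"
  using indep_vars_pair[OF indep] by auto

lemma iid_seq_compose:
  fixes f :: "real \<Rightarrow> real"
  assumes [measurable]: "f \<in> borel_measurable borel" and "integrable M (\<lambda>\<omega>. f (X 0 \<omega>))"
  shows "iid_seq M (\<lambda>k \<omega>. f (X k \<omega>))"
proof
  show "indep_vars (\<lambda>_. borel) (\<lambda>k \<omega>. f (X k \<omega>)) UNIV"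
    by (rule indep_vars_compose2[OF indep]) auto
  show "distr M borel (\<lambda>\<omega>. f (X k \<omega>)) = distr M borel (\<lambda>\<omega>. f (X 0 \<omega>))" for k
    by (rule distr_eq_imp_distr_compose_eq[OF distr_eq]) auto
qed (fact assms(2))

end

lemma sum_indicator_greaterThan_Suc_le:
  fixes x :: real
  assumes "x \<ge> 0"
  shows "(\<Sum>k<n. indicator {real (Suc k)<..} x :: real) \<le> x"
proof -
  have "(\<Sum>k<n. indicator {real (Suc k)<..} x :: real) \<le> real n \<and> (\<Sum>k<n. indicator {real (Suc k)<..} x :: real) \<le> x" for n
  proof (induction n)
    case (Suc n)
    then show ?case by (cases "real (Suc n) < x") (simp_all add: indicator_def)
  qed (use assms in simp)
  then show ?thesis by blast
qed

text \<open>Etemadi's proof of the strong law for nonnegative variables: truncate \<open>X k\<close> at level \<open>k + 1\<close>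
  (by Borel--Cantelli this changes only finitely many terms), apply Chebyshev's inequality along
  the geometric subsequences \<open>floor_pow \<beta>\<close>, and interpolate using monotonicity of the partial sums.\<close>

locale iid_nonneg = iid_seq +
  assumes nonneg: "\<And>k \<omega>. X k \<omega> \<ge> 0"
begin

definition trunc_at :: "nat \<Rightarrow> real \<Rightarrow> real" where
  "trunc_at k x = (if x \<le> real (Suc k) then x else 0)"

definition Xt :: "nat \<Rightarrow> 'a \<Rightarrow> real" where
  "Xt k \<omega> = trunc_at k (X k \<omega>)"

lemma measurable_trunc_at[measurable]: "trunc_at k \<in> borel_measurable borel"
  unfolding trunc_at_def by measurable

lemma measurable_Xt[measurable]: "Xt k \<in> borel_measurable M"
  unfolding Xt_def by measurable

lemma trunc_at_bounds: "x \<ge> 0 \<Longrightarrow> 0 \<le> trunc_at k x \<and> trunc_at k x \<le> x \<and> trunc_at k x \<le> real (Suc k)"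
  unfolding trunc_at_def by auto

lemma integrable_Xt: "integrable M (Xt k)"
  using nonneg trunc_at_bounds
  by (intro integrable_const_bound[where B="real (Suc k)"] AE_I2) (auto simp: Xt_def)

lemma AE_eventually_X_eq_Xt: "AE \<omega> in M. eventually (\<lambda>k. X k \<omega> = Xt k \<omega>) sequentially"
proof -
  define A where "A k = {\<omega>\<in>space M. X k \<omega> \<in> {real (Suc k)<..}}" for k
  have A_sets[measurable]: "A k \<in> sets M" for k unfolding A_def by measurable
  have indicator_int: "integrable M (\<lambda>\<omega>. indicator {real (Suc k)<..} (X 0 \<omega>) :: real)" for k
    by (intro integrable_const_bound[where B=1] AE_I2) (auto simp: indicator_def)
  have prob_A: "prob (A k) = expectation (\<lambda>\<omega>. indicator {real (Suc k)<..} (X 0 \<omega>))" for k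
  proof -
    have "(\<lambda>\<omega>. indicator {real (Suc k)<..} (X k \<omega>) :: real) = indicator {\<omega>. X k \<omega> \<in> {real (Suc k)<..}}"
      by (auto simp: indicator_def)
    then have "prob (A k) = expectation (\<lambda>\<omega>. indicator {real (Suc k)<..} (X k \<omega>))"
      unfolding A_def by (simp add: Collect_conj_eq Int_commute)
    also have "\<dots> = expectation (\<lambda>\<omega>. indicator {real (Suc k)<..} (X 0 \<omega>))"
      by (rule integral_compose_X) auto
    finally show ?thesis .
  qed
  have "summable (\<lambda>k. prob (A k))"
  proof (rule summableI_nonneg_bounded)
    fix n
    have "(\<Sum>k<n. prob (A k)) = expectation (\<lambda>\<omega>. \<Sum>k<n. indicator {real (Suc k)<..} (X 0 \<omega>))"
      using indicator_int by (simp add: prob_A Bochner_Integration.integral_sum)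
    also have "\<dots> \<le> expectation (X 0)"
      using nonneg integrable_X0 indicator_int
      by (intro integral_mono sum_indicator_greaterThan_Suc_le Bochner_Integration.integrable_sum) auto
    finally show "(\<Sum>k<n. prob (A k)) \<le> expectation (X 0)" .
  qed auto
  then have "AE \<omega> in M. eventually (\<lambda>k. \<omega> \<in> space M - A k) sequentially"
    by (intro borel_cantelli_AE1) (auto simp: less_top[symmetric])
  then show ?thesis
  proof (rule AE_mp[OF _ AE_I2], intro impI)
    fix \<omega> assume "\<omega> \<in> space M" "eventually (\<lambda>k. \<omega> \<in> space M - A k) sequentially"
    then show "eventually (\<lambda>k. X k \<omega> = Xt k \<omega>) sequentially"
      by (elim eventually_mono) (auto simp: A_def Xt_def trunc_at_def)
  qed
qed

lemma expectation_Xt_tendsto: "(\<lambda>k. expectation (Xt k)) \<longlonglongrightarrow> expectation (X 0)"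
proof -
  have eq: "expectation (Xt k) = expectation (\<lambda>\<omega>. trunc_at k (X 0 \<omega>))" for k
    unfolding Xt_def by (rule integral_compose_X) auto
  have "(\<lambda>k. expectation (\<lambda>\<omega>. trunc_at k (X 0 \<omega>))) \<longlonglongrightarrow> expectation (X 0)"
  proof (rule integral_dominated_convergence[where w="X 0"])
    show "AE \<omega> in M. (\<lambda>k. trunc_at k (X 0 \<omega>)) \<longlonglongrightarrow> X 0 \<omega>"
    proof (rule AE_I2)
      fix \<omega>
      obtain K :: nat where "X 0 \<omega> \<le> real K" using real_arch_simple by blast
      then have "eventually (\<lambda>k. trunc_at k (X 0 \<omega>) = X 0 \<omega>) sequentially"
        unfolding eventually_sequentially trunc_at_def by (intro exI[of _ K]) auto
      then show "(\<lambda>k. trunc_at k (X 0 \<omega>)) \<longlonglongrightarrow> X 0 \<omega>" by (rule tendsto_eventually)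
    qed
    show "AE \<omega> in M. norm (trunc_at k (X 0 \<omega>)) \<le> X 0 \<omega>" for k
      using trunc_at_bounds[OF nonneg] by auto
  qed (use integrable_X0 in auto)
  then show ?thesis unfolding eq .
qed

definition sq_upto :: "nat \<Rightarrow> real \<Rightarrow> real" where
  "sq_upto m x = (if x \<le> real m then x\<^sup>2 else 0)"

lemma measurable_sq_upto[measurable]: "sq_upto m \<in> borel_measurable borel"
  unfolding sq_upto_def by measurable

lemma integrable_sq_upto: "integrable M (\<lambda>\<omega>. sq_upto m (X 0 \<omega>))"
  using nonneg
  by (intro integrable_const_bound[where B="(real m)\<^sup>2"] AE_I2) (auto simp: sq_upto_def intro: power_mono)

lemma expectation_centered_Xt_sq_le:
  assumes "j < m"
  shows "expectation (\<lambda>\<omega>. (Xt j \<omega> - expectation (Xt j))\<^sup>2) \<le> expectation (\<lambda>\<omega>. sq_upto m (X 0 \<omega>))"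
proof -
  have sq_trunc_int: "integrable M (\<lambda>\<omega>. (trunc_at j (X i \<omega>))\<^sup>2)" for i
    using trunc_at_bounds[OF nonneg]
    by (intro integrable_const_bound[where B="(real (Suc j))\<^sup>2"] AE_I2) (auto intro: power_mono)
  have "expectation (\<lambda>\<omega>. (Xt j \<omega> - expectation (Xt j))\<^sup>2)
      = expectation (\<lambda>\<omega>. (Xt j \<omega>)\<^sup>2 - 2 * expectation (Xt j) * Xt j \<omega> + (expectation (Xt j))\<^sup>2)"
    by (simp add: power2_diff algebra_simps)
  also have "\<dots> = expectation (\<lambda>\<omega>. (Xt j \<omega>)\<^sup>2) - (expectation (Xt j))\<^sup>2"
    using sq_trunc_int[of j] integrable_Xt[of j] unfolding Xt_def[symmetric]
    by (simp add: power2_eq_square prob_space)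
  also have "\<dots> \<le> expectation (\<lambda>\<omega>. (Xt j \<omega>)\<^sup>2)" by simp
  also have "\<dots> = expectation (\<lambda>\<omega>. (trunc_at j (X 0 \<omega>))\<^sup>2)"
    unfolding Xt_def by (rule integral_compose_X) auto
  also have "\<dots> \<le> expectation (\<lambda>\<omega>. sq_upto m (X 0 \<omega>))"
    using assms nonneg sq_trunc_int integrable_sq_upto
    by (intro integral_mono) (auto simp: trunc_at_def sq_upto_def)
  finally show ?thesis .
qed

lemma expectation_sum_centered_Xt_sq_le:
  "expectation (\<lambda>\<omega>. (\<Sum>j<m. Xt j \<omega> - expectation (Xt j))\<^sup>2) \<le> real m * expectation (\<lambda>\<omega>. sq_upto m (X 0 \<omega>))"
proof -
  define Z where "Z j \<omega> = Xt j \<omega> - expectation (Xt j)" for j \<omega>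
  have "expectation (\<lambda>\<omega>. (\<Sum>j<m. Z j \<omega>)\<^sup>2) = (\<Sum>j<m. expectation (\<lambda>\<omega>. (Z j \<omega>)\<^sup>2))"
  proof (rule expectation_square_sum_indep)
    show "Z j \<in> borel_measurable M" for j unfolding Z_def by measurable
    show "\<bar>Z j \<omega>\<bar> \<le> real (Suc j) + \<bar>expectation (Xt j)\<bar>" for j \<omega>
      using trunc_at_bounds[OF nonneg[of j \<omega>], of j] unfolding Z_def Xt_def by auto
    show "expectation (Z j) = 0" for j
      unfolding Z_def using integrable_Xt by (simp add: prob_space)
    show "indep_var borel (Z j) borel (Z l)" if "j \<noteq> l" for j l
    proof -
      have "indep_var borel ((\<lambda>x. trunc_at j x - expectation (Xt j)) \<circ> X j)
          borel ((\<lambda>x. trunc_at l x - expectation (Xt l)) \<circ> X l)"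
        by (rule indep_var_compose[OF indep_var_X[OF that]]) auto
      then show ?thesis by (simp add: comp_def Z_def[abs_def] Xt_def)
    qed
  qed
  also have "\<dots> \<le> (\<Sum>j<m. expectation (\<lambda>\<omega>. sq_upto m (X 0 \<omega>)))"
    unfolding Z_def by (intro sum_mono expectation_centered_Xt_sq_le) simp
  finally show ?thesis unfolding Z_def by simp
qed

lemma abs_sum_centered_Xt_le:
  "\<bar>\<Sum>j<m. Xt j \<omega> - expectation (Xt j)\<bar> \<le> (\<Sum>j<m. real (Suc j) + \<bar>expectation (Xt j)\<bar>)"
proof -
  have "\<bar>\<Sum>j<m. Xt j \<omega> - expectation (Xt j)\<bar> \<le> (\<Sum>j<m. \<bar>Xt j \<omega> - expectation (Xt j)\<bar>)" by (rule sum_abs)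
  also have "\<dots> \<le> (\<Sum>j<m. real (Suc j) + \<bar>expectation (Xt j)\<bar>)"
    using trunc_at_bounds[OF nonneg] unfolding Xt_def by (intro sum_mono) (smt (verit))
  finally show ?thesis .
qed

lemma AE_centered_Xt_average_floor_pow_tendsto_0:
  assumes b: "\<beta> > 1"
  shows "AE \<omega> in M. (\<lambda>n. (\<Sum>j<floor_pow \<beta> n. Xt j \<omega> - expectation (Xt j)) / real (floor_pow \<beta> n)) \<longlonglongrightarrow> 0"
proof -
  define K where "K = floor_pow \<beta>"
  define B where "B n = (\<Sum>j<K n. real (Suc j) + \<bar>expectation (Xt j)\<bar>)" for n
  define Z where "Z n \<omega> = (\<Sum>j<K n. Xt j \<omega> - expectation (Xt j)) / real (K n)" for n \<omega>
  have K_pos: "real (K n) > 0" for n using floor_pow_bounds(4)[OF b, of n] unfolding K_def by simp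
  have [measurable]: "Z n \<in> borel_measurable M" for n unfolding Z_def by measurable
  have Z_sq_int: "integrable M (\<lambda>\<omega>. (Z n \<omega>)\<^sup>2)" for n
  proof (rule integrable_const_bound[where B="(B n / real (K n))\<^sup>2"])
    have "\<bar>Z n \<omega>\<bar> \<le> B n / real (K n)" for \<omega>
      unfolding Z_def B_def abs_divide using abs_sum_centered_Xt_le K_pos[of n] by (simp add: divide_right_mono)
    moreover have "B n \<ge> 0" unfolding B_def by (intro sum_nonneg) auto
    ultimately show "AE \<omega> in M. norm ((Z n \<omega>)\<^sup>2) \<le> (B n / real (K n))\<^sup>2"
      by (intro AE_I2) (auto simp: abs_le_square_iff[symmetric])
  qed auto
  define g where "g n = expectation (\<lambda>\<omega>. sq_upto (K n) (X 0 \<omega>) / real (K n))" for n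
  have g_nonneg: "g n \<ge> 0" for n unfolding g_def by (intro integral_nonneg_AE) (auto simp: sq_upto_def)
  have "summable g"
  proof (rule summableI_nonneg_bounded)
    fix N
    have "(\<Sum>n<N. g n) = expectation (\<lambda>\<omega>. \<Sum>n<N. sq_upto (K n) (X 0 \<omega>) / real (K n))"
      unfolding g_def using integrable_sq_upto by (subst Bochner_Integration.integral_sum) auto
    also have "\<dots> \<le> expectation (\<lambda>\<omega>. 2 * \<beta> / (\<beta> - 1) * X 0 \<omega>)"
      using integrable_sq_upto integrable_X0
      unfolding sq_upto_def K_def by (intro integral_mono sum_truncated_square_over_floor_pow_le nonneg b) auto
    finally show "(\<Sum>n<N. g n) \<le> expectation (\<lambda>\<omega>. 2 * \<beta> / (\<beta> - 1) * X 0 \<omega>)" .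
  qed (rule g_nonneg)
  have "expectation (\<lambda>\<omega>. (Z n \<omega>)\<^sup>2) \<le> g n" for n
  proof -
    have "expectation (\<lambda>\<omega>. (Z n \<omega>)\<^sup>2)
        = expectation (\<lambda>\<omega>. (\<Sum>j<K n. Xt j \<omega> - expectation (Xt j))\<^sup>2) / (real (K n))\<^sup>2"
      unfolding Z_def by (simp add: power_divide)
    also have "\<dots> \<le> real (K n) * expectation (\<lambda>\<omega>. sq_upto (K n) (X 0 \<omega>)) / (real (K n))\<^sup>2"
      by (intro divide_right_mono expectation_sum_centered_Xt_sq_le) auto
    also have "\<dots> = g n" unfolding g_def using K_pos[of n] by (simp add: power2_eq_square)
    finally show ?thesis .
  qed
  then have "summable (\<lambda>n. expectation (\<lambda>\<omega>. (Z n \<omega>)\<^sup>2))"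
    by (intro summable_comparison_test[OF _ \<open>summable g\<close>]) auto
  from AE_tendsto_0_of_summable_second_moments[OF _ Z_sq_int this]
  show ?thesis unfolding Z_def K_def by simp
qed

lemma AE_average_floor_pow_tendsto:
  assumes b: "\<beta> > 1"
  shows "AE \<omega> in M. (\<lambda>n. (\<Sum>j<floor_pow \<beta> n. X j \<omega>) / real (floor_pow \<beta> n)) \<longlonglongrightarrow> expectation (X 0)"
  using AE_eventually_X_eq_Xt AE_centered_Xt_average_floor_pow_tendsto_0[OF b]
proof (eventually_elim)
  fix \<omega>
  assume ev: "eventually (\<lambda>k. X k \<omega> = Xt k \<omega>) sequentially"
    and centered: "(\<lambda>n. (\<Sum>j<floor_pow \<beta> n. (Xt j \<omega> - expectation (Xt j))) / real (floor_pow \<beta> n)) \<longlonglongrightarrow> 0"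
  define K where "K = floor_pow \<beta>"
  have K_lim: "filterlim K at_top sequentially" unfolding K_def by (rule filterlim_floor_pow[OF b])
  have mean_Xt: "(\<lambda>n. (\<Sum>j<K n. expectation (Xt j)) / real (K n)) \<longlonglongrightarrow> expectation (X 0)"
    using filterlim_compose[OF cesaro_mean_tendsto[OF expectation_Xt_tendsto] K_lim] .
  obtain N0 where N0: "\<And>k. k \<ge> N0 \<Longrightarrow> X k \<omega> = Xt k \<omega>" using ev unfolding eventually_sequentially by blast
  define c where "c = (\<Sum>j<N0. X j \<omega> - Xt j \<omega>)"
  have correction_const: "(\<Sum>j<m. X j \<omega> - Xt j \<omega>) = c" if "m \<ge> N0" for m
    using that
  proof (induction m rule: dec_induct)
    case base then show ?case unfolding c_def by simp
  next
    case (step m) then show ?case using N0[of m] by simp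
  qed
  have K_infinity: "filterlim (\<lambda>n. real (K n)) at_infinity sequentially"
    by (rule filterlim_at_top_imp_at_infinity[OF filterlim_compose[OF filterlim_real_sequentially K_lim]])
  have const_over_K: "(\<lambda>n. c / real (K n)) \<longlonglongrightarrow> 0"
    by (rule tendsto_divide_0[OF tendsto_const K_infinity])
  have K_large: "eventually (\<lambda>n. K n \<ge> N0) sequentially" using K_lim by (simp add: filterlim_at_top)
  have finite_correction: "(\<lambda>n. (\<Sum>j<K n. X j \<omega> - Xt j \<omega>) / real (K n)) \<longlonglongrightarrow> 0"
    by (rule Lim_transform_eventually[OF const_over_K]) (use K_large correction_const in \<open>auto elim: eventually_mono\<close>)
  have "(\<lambda>n. (\<Sum>j<K n. (Xt j \<omega> - expectation (Xt j))) / real (K n) + (\<Sum>j<K n. expectation (Xt j)) / real (K n)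
          + (\<Sum>j<K n. X j \<omega> - Xt j \<omega>) / real (K n)) \<longlonglongrightarrow> 0 + expectation (X 0) + 0"
    using centered unfolding K_def[symmetric] by (intro tendsto_add mean_Xt finite_correction)
  moreover have "(\<Sum>j<K n. (Xt j \<omega> - expectation (Xt j))) / real (K n) + (\<Sum>j<K n. expectation (Xt j)) / real (K n)
          + (\<Sum>j<K n. X j \<omega> - Xt j \<omega>) / real (K n) = (\<Sum>j<K n. X j \<omega>) / real (K n)" for n
    by (simp add: add_divide_distrib[symmetric] sum_subtractf)
  ultimately show "(\<lambda>n. (\<Sum>j<floor_pow \<beta> n. X j \<omega>) / real (floor_pow \<beta> n)) \<longlonglongrightarrow> expectation (X 0)"
    unfolding K_def by simp
qed

lemma slln_nonneg: "AE \<omega> in M. (\<lambda>n. (\<Sum>j<n. X j \<omega>) / real n) \<longlonglongrightarrow> expectation (X 0)"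
proof -
  have "AE \<omega> in M. \<forall>j::nat. (\<lambda>n. (\<Sum>i<floor_pow (1 + 1 / real (Suc j)) n. X i \<omega>) / real (floor_pow (1 + 1 / real (Suc j)) n)) \<longlonglongrightarrow> expectation (X 0)"
    by (subst AE_all_countable) (auto intro!: AE_average_floor_pow_tendsto)
  then show ?thesis
  proof (rule AE_mp[OF _ AE_I2], intro impI)
    fix \<omega>
    assume H: "\<forall>j::nat. (\<lambda>n. (\<Sum>i<floor_pow (1 + 1 / real (Suc j)) n. X i \<omega>) / real (floor_pow (1 + 1 / real (Suc j)) n)) \<longlonglongrightarrow> expectation (X 0)"
    show "(\<lambda>n. (\<Sum>j<n. X j \<omega>) / real n) \<longlonglongrightarrow> expectation (X 0)"
    proof (rule mono_average_tendsto_of_geometric_subsequences)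
      show "mono (\<lambda>n. \<Sum>j<n. X j \<omega>)"
        unfolding mono_def using nonneg by (auto intro!: sum_mono2)
      show "0 \<le> (\<Sum>j<n. X j \<omega>)" for n using nonneg by (auto intro: sum_nonneg)
      show "0 \<le> expectation (X 0)" using nonneg by (auto intro: integral_nonneg_AE)
      fix j :: nat
      have b: "1 + 1 / real (Suc j) > 1" by simp
      show "\<exists>kk'. filterlim kk' at_top sequentially \<and> (\<forall>n. 0 < kk' n) \<and>
          (\<lambda>n. real (kk' (Suc n)) / real (kk' n)) \<longlonglongrightarrow> 1 + 1 / real (Suc j) \<and>
          (\<lambda>n. (\<Sum>i<kk' n. X i \<omega>) / real (kk' n)) \<longlonglongrightarrow> expectation (X 0)"
        using filterlim_floor_pow[OF b] floor_pow_bounds(4)[OF b] floor_pow_ratio_tendsto[OF b] H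
        by (intro exI[of _ "floor_pow (1 + 1 / real (Suc j))"]) (auto simp del: of_nat_Suc intro: Suc_le_lessD)
    qed
  qed
qed

end

theorem (in iid_seq) slln: "AE \<omega> in M. (\<lambda>n. (\<Sum>j<n. X j \<omega>) / real n) \<longlonglongrightarrow> expectation (X 0)"
proof -
  have ip: "integrable M (\<lambda>\<omega>. max (X 0 \<omega>) 0)" using integrable_X0 by auto
  have iq: "integrable M (\<lambda>\<omega>. max (- X 0 \<omega>) 0)" using integrable_X0 by auto
  interpret P: iid_nonneg M "\<lambda>k \<omega>. max (X k \<omega>) 0"
  proof -
    interpret iid_seq M "\<lambda>k \<omega>. max (X k \<omega>) 0" by (rule iid_seq_compose[OF _ ip]) auto
    show "iid_nonneg M (\<lambda>k \<omega>. max (X k \<omega>) 0)" by unfold_locales auto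
  qed
  interpret Q: iid_nonneg M "\<lambda>k \<omega>. max (- X k \<omega>) 0"
  proof -
    interpret iid_seq M "\<lambda>k \<omega>. max (- X k \<omega>) 0" by (rule iid_seq_compose[OF _ iq]) auto
    show "iid_nonneg M (\<lambda>k \<omega>. max (- X k \<omega>) 0)" by unfold_locales auto
  qed
  show ?thesis
    using P.slln_nonneg Q.slln_nonneg
  proof eventually_elim
    fix \<omega>
    assume a: "(\<lambda>n. (\<Sum>j<n. max (X j \<omega>) 0) / real n) \<longlonglongrightarrow> expectation (\<lambda>\<omega>. max (X 0 \<omega>) 0)"
      and b: "(\<lambda>n. (\<Sum>j<n. max (- X j \<omega>) 0) / real n) \<longlonglongrightarrow> expectation (\<lambda>\<omega>. max (- X 0 \<omega>) 0)"
    have "(\<lambda>n. (\<Sum>j<n. max (X j \<omega>) 0) / real n - (\<Sum>j<n. max (- X j \<omega>) 0) / real n)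
      \<longlonglongrightarrow> expectation (\<lambda>\<omega>. max (X 0 \<omega>) 0) - expectation (\<lambda>\<omega>. max (- X 0 \<omega>) 0)"
      by (rule tendsto_diff[OF a b])
    moreover have "(\<Sum>j<n. max (X j \<omega>) 0) / real n - (\<Sum>j<n. max (- X j \<omega>) 0) / real n = (\<Sum>j<n. X j \<omega>) / real n" for n
    proof -
      have "(\<Sum>j<n. max (X j \<omega>) 0) - (\<Sum>j<n. max (- X j \<omega>) 0) = (\<Sum>j<n. X j \<omega>)"
        by (simp add: sum_subtractf[symmetric]) (intro sum.cong, auto)
      then show ?thesis by (simp add: diff_divide_distrib[symmetric])
    qed
    moreover have "expectation (\<lambda>\<omega>. max (X 0 \<omega>) 0) - expectation (\<lambda>\<omega>. max (- X 0 \<omega>) 0) = expectation (X 0)"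
    proof -
      have "expectation (\<lambda>\<omega>. max (X 0 \<omega>) 0) - expectation (\<lambda>\<omega>. max (- X 0 \<omega>) 0)
          = expectation (\<lambda>\<omega>. max (X 0 \<omega>) 0 - max (- X 0 \<omega>) 0)"
        using ip iq by simp
      also have "(\<lambda>\<omega>. max (X 0 \<omega>) 0 - max (- X 0 \<omega>) 0) = X 0" by (auto simp: max_def)
      finally show ?thesis .
    qed
    ultimately show "(\<lambda>n. (\<Sum>j<n. X j \<omega>) / real n) \<longlonglongrightarrow> expectation (X 0)" by simp
  qed
qed

section \<open>Exceedance averages in the FIR model\<close>

locale fir = prob_space +
  fixes u w :: "int \<Rightarrow> 'a \<Rightarrow> real"
  assumes indep: "indep_vars (\<lambda>_. borel) (\<lambda>i. case i of Inl t \<Rightarrow> u t | Inr t \<Rightarrow> w t) (UNIV :: (int + int) set)"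
    and iid_u: "\<And>t. distr M borel (u t) = distr M borel (u 0)"
    and iid_w: "\<And>t. distr M borel (w t) = distr M borel (w 0)"
begin

definition xi :: "int + int \<Rightarrow> 'a \<Rightarrow> real" where
  "xi i = (case i of Inl t \<Rightarrow> u t | Inr t \<Rightarrow> w t)"

lemma xi_Inl[simp]: "xi (Inl t) = u t" and xi_Inr[simp]: "xi (Inr t) = w t"
  by (simp_all add: xi_def)

lemma indep_xi: "indep_vars (\<lambda>_. borel) xi UNIV"
  using indep unfolding xi_def[abs_def] .

lemma measurable_xi[measurable]: "xi i \<in> borel_measurable M"
  using indep_xi unfolding indep_vars_def by auto

lemma measurable_u[measurable]: "u t \<in> borel_measurable M"
  using measurable_xi[of "Inl t"] by simp

lemma measurable_w[measurable]: "w t \<in> borel_measurable M"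
  using measurable_xi[of "Inr t"] by simp

lemma distr_xi_pair_eq:
  assumes "a \<noteq> b" "a' \<noteq> b'"
    and "distr M borel (xi a) = distr M borel (xi a')" "distr M borel (xi b) = distr M borel (xi b')"
  shows "distr M (borel \<Otimes>\<^sub>M borel) (\<lambda>\<omega>. (xi a \<omega>, xi b \<omega>)) = distr M (borel \<Otimes>\<^sub>M borel) (\<lambda>\<omega>. (xi a' \<omega>, xi b' \<omega>))"
proof -
  have "indep_var borel (xi a) borel (xi b)" "indep_var borel (xi a') borel (xi b')"
    using indep_vars_pair[OF indep_xi] assms(1,2) by auto
  then show ?thesis unfolding indep_var_distribution_eq assms(3,4) by simp
qed

lemma iid_seq_pair_blocks:
  fixes G :: "real \<times> real \<Rightarrow> real" and \<sigma> \<rho> :: "nat \<Rightarrow> int + int"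
  assumes G[measurable]: "G \<in> borel_measurable (borel \<Otimes>\<^sub>M borel)"
    and neq: "\<And>k. \<sigma> k \<noteq> \<rho> k"
    and disj: "\<And>k l. k \<noteq> l \<Longrightarrow> {\<sigma> k, \<rho> k} \<inter> {\<sigma> l, \<rho> l} = {}"
    and ds: "\<And>k. distr M borel (xi (\<sigma> k)) = distr M borel (xi (\<sigma> 0))"
    and dr: "\<And>k. distr M borel (xi (\<rho> k)) = distr M borel (xi (\<rho> 0))"
    and int: "integrable M (\<lambda>\<omega>. G (xi (\<sigma> 0) \<omega>, xi (\<rho> 0) \<omega>))"
  shows "iid_seq M (\<lambda>k \<omega>. G (xi (\<sigma> k) \<omega>, xi (\<rho> k) \<omega>))"
proof
  define K where "K k = {\<sigma> k, \<rho> k}" for k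
  have "disjoint_family_on K UNIV"
    unfolding disjoint_family_on_def K_def using disj by auto
  then have "indep_vars (\<lambda>k. Pi\<^sub>M (K k) (\<lambda>_. borel)) (\<lambda>k \<omega>. restrict (\<lambda>i. xi i \<omega>) (K k)) UNIV"
    by (intro indep_vars_restrict[OF indep_xi]) auto
  then have "indep_vars (\<lambda>_. borel) (\<lambda>k \<omega>. (\<lambda>f. G (f (\<sigma> k), f (\<rho> k))) (restrict (\<lambda>i. xi i \<omega>) (K k))) UNIV"
  proof (rule indep_vars_compose2)
    fix k :: nat
    have "(\<lambda>f. (f (\<sigma> k), f (\<rho> k))) \<in> measurable (Pi\<^sub>M (K k) (\<lambda>_. borel)) (borel \<Otimes>\<^sub>M borel)"
      by (intro measurable_Pair measurable_component_singleton) (auto simp: K_def)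
    then show "(\<lambda>f. G (f (\<sigma> k), f (\<rho> k))) \<in> borel_measurable (Pi\<^sub>M (K k) (\<lambda>_. borel))"
      by (rule measurable_compose[OF _ G])
  qed
  moreover have "(\<lambda>k \<omega>. (\<lambda>f. G (f (\<sigma> k), f (\<rho> k))) (restrict (\<lambda>i. xi i \<omega>) (K k))) = (\<lambda>k \<omega>. G (xi (\<sigma> k) \<omega>, xi (\<rho> k) \<omega>))"
    by (auto simp: K_def fun_eq_iff)
  ultimately show "indep_vars (\<lambda>_. borel) (\<lambda>k \<omega>. G (xi (\<sigma> k) \<omega>, xi (\<rho> k) \<omega>)) UNIV" by simp
  show "distr M borel (\<lambda>\<omega>. G (xi (\<sigma> k) \<omega>, xi (\<rho> k) \<omega>)) = distr M borel (\<lambda>\<omega>. G (xi (\<sigma> 0) \<omega>, xi (\<rho> 0) \<omega>))" for k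
    using distr_eq_imp_distr_compose_eq[OF distr_xi_pair_eq[OF neq[of k] neq[of 0] ds[of k] dr[of k]], where f=G and K=borel] by simp
qed (fact int)

text \<open>The pairs \<open>(u t, xi (\<rho> t))\<close> for different \<open>t\<close> may share a variable (e.g. \<open>\<rho> t = Inl (t + m)\<close>);
  splitting the times into residue classes modulo a large \<open>L\<close> restores independence.\<close>

lemma AE_pair_average_residue_class_tendsto:
  fixes G :: "real \<times> real \<Rightarrow> real" and \<rho> :: "int \<Rightarrow> int + int" and L :: nat
  assumes G[measurable]: "G \<in> borel_measurable (borel \<Otimes>\<^sub>M borel)"
    and L: "L > 0"
    and neq: "\<And>t. \<rho> t \<noteq> Inl t"
    and disj: "\<And>t s. t \<noteq> s \<Longrightarrow> int L dvd (t - s) \<Longrightarrow> {Inl t, \<rho> t} \<inter> {Inl s, \<rho> s} = {}"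
    and dr: "\<And>t. distr M borel (xi (\<rho> t)) = distr M borel (xi (\<rho> 0))"
    and int: "integrable M (\<lambda>\<omega>. G (u 0 \<omega>, xi (\<rho> 0) \<omega>))"
  shows "AE \<omega> in M. (\<lambda>n. (\<Sum>k<n. G (u (int (r + L * k) + 1) \<omega>, xi (\<rho> (int (r + L * k) + 1)) \<omega>)) / real n)
            \<longlonglongrightarrow> expectation (\<lambda>\<omega>. G (u 0 \<omega>, xi (\<rho> 0) \<omega>))"
proof -
  have du: "distr M borel (xi (Inl t)) = distr M borel (xi (Inl 0))" for t using iid_u by simp
  have neq': "Inl t \<noteq> \<rho> t" for t using neq[of t] by metis
  define t :: "nat \<Rightarrow> int" where "t k = int (r + L * k) + 1" for k
  have same_distr: "distr M (borel \<Otimes>\<^sub>M borel) (\<lambda>\<omega>. (xi (Inl (t 0)) \<omega>, xi (\<rho> (t 0)) \<omega>))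
      = distr M (borel \<Otimes>\<^sub>M borel) (\<lambda>\<omega>. (xi (Inl 0) \<omega>, xi (\<rho> 0) \<omega>))"
    by (rule distr_xi_pair_eq[OF neq' neq' du dr])
  have "iid_seq M (\<lambda>k \<omega>. G (xi (Inl (t k)) \<omega>, xi (\<rho> (t k)) \<omega>))"
  proof (rule iid_seq_pair_blocks[OF G])
    show "{Inl (t k), \<rho> (t k)} \<inter> {Inl (t l), \<rho> (t l)} = {}" if "k \<noteq> l" for k l
    proof (rule disj)
      show "t k \<noteq> t l" using that L by (simp add: t_def)
      show "int L dvd (t k - t l)"
        by (rule dvdI[of _ _ "int k - int l"]) (simp add: t_def algebra_simps)
    qed
    show "integrable M (\<lambda>\<omega>. G (xi (Inl (t 0)) \<omega>, xi (\<rho> (t 0)) \<omega>))"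
      using distr_eq_imp_integral_eq(2)[OF same_distr, of G] int by simp
    show "Inl (t k) \<noteq> \<rho> (t k)" for k by (rule neq')
    show "distr M borel (xi (Inl (t k))) = distr M borel (xi (Inl (t 0)))" for k
      by (rule trans[OF du du[symmetric]])
    show "distr M borel (xi (\<rho> (t k))) = distr M borel (xi (\<rho> (t 0)))" for k
      by (rule trans[OF dr dr[symmetric]])
  qed
  then interpret Z: iid_seq M "\<lambda>k \<omega>. G (xi (Inl (t k)) \<omega>, xi (\<rho> (t k)) \<omega>)" .
  have "expectation (\<lambda>\<omega>. G (xi (Inl (t 0)) \<omega>, xi (\<rho> (t 0)) \<omega>)) = expectation (\<lambda>\<omega>. G (u 0 \<omega>, xi (\<rho> 0) \<omega>))"
    using distr_eq_imp_integral_eq(1)[OF same_distr, of G] by simp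
  with Z.slln show ?thesis by (simp add: t_def)
qed

lemma AE_pair_average_tendsto:
  fixes G :: "real \<times> real \<Rightarrow> real" and \<rho> :: "int \<Rightarrow> int + int" and L :: nat
  assumes G[measurable]: "G \<in> borel_measurable (borel \<Otimes>\<^sub>M borel)"
    and L: "L > 0"
    and neq: "\<And>t. \<rho> t \<noteq> Inl t"
    and disj: "\<And>t s. t \<noteq> s \<Longrightarrow> int L dvd (t - s) \<Longrightarrow> {Inl t, \<rho> t} \<inter> {Inl s, \<rho> s} = {}"
    and dr: "\<And>t. distr M borel (xi (\<rho> t)) = distr M borel (xi (\<rho> 0))"
    and int: "integrable M (\<lambda>\<omega>. G (u 0 \<omega>, xi (\<rho> 0) \<omega>))"
  shows "AE \<omega> in M. (\<lambda>T. (\<Sum>t<T. G (u (int t + 1) \<omega>, xi (\<rho> (int t + 1)) \<omega>)) / real T)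
            \<longlonglongrightarrow> expectation (\<lambda>\<omega>. G (u 0 \<omega>, xi (\<rho> 0) \<omega>))"
proof -
  have "AE \<omega> in M. \<forall>r\<in>{..<L}. (\<lambda>n. (\<Sum>k<n. G (u (int (r + L * k) + 1) \<omega>, xi (\<rho> (int (r + L * k) + 1)) \<omega>)) / real n)
            \<longlonglongrightarrow> expectation (\<lambda>\<omega>. G (u 0 \<omega>, xi (\<rho> 0) \<omega>))"
    by (intro AE_finite_allI AE_pair_average_residue_class_tendsto[OF G L neq disj dr int]) simp
  then show ?thesis
    by (rule AE_mp[OF _ AE_I2])
      (auto intro!: cesaro_mean_of_residue_classes[OF L, where a="\<lambda>t. G (u (int t + 1) \<omega>, xi (\<rho> (int t + 1)) \<omega>)" for \<omega>])
qed

lemma expectation_u: "expectation (u t) = expectation (u 0)"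
  and integrable_u_iff: "integrable M (u t) \<longleftrightarrow> integrable M (u 0)"
  using distr_eq_imp_integral_eq[OF iid_u measurable_u measurable_u measurable_ident_sets[OF refl]] by simp_all

lemma expectation_w: "expectation (w t) = expectation (w 0)"
  and integrable_w_iff: "integrable M (w t) \<longleftrightarrow> integrable M (w 0)"
  using distr_eq_imp_integral_eq[OF iid_w measurable_w measurable_w measurable_ident_sets[OF refl]] by simp_all

lemma exceedance_indicator:
  shows "integrable M (\<lambda>\<omega>. if c < u 0 \<omega> then 1 else 0 :: real)"
    and "expectation (\<lambda>\<omega>. if c < u 0 \<omega> then 1 else 0 :: real) = prob {x \<in> space M. u 0 x > c}"
proof -
  show "integrable M (\<lambda>\<omega>. if c < u 0 \<omega> then 1 else 0 :: real)"
    by (intro integrable_const_bound[where B=1] AE_I2) auto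
  have "(\<lambda>\<omega>. if c < u 0 \<omega> then 1 else 0 :: real) = indicator {x. u 0 x > c}"
    by (auto simp: indicator_def)
  then show "expectation (\<lambda>\<omega>. if c < u 0 \<omega> then 1 else 0 :: real) = prob {x \<in> space M. u 0 x > c}"
    by (simp add: Collect_conj_eq Int_commute)
qed

lemma exceedance_times_xi:
  assumes b: "b \<noteq> Inl 0" and ib: "integrable M (xi b)"
  shows "integrable M (\<lambda>\<omega>. if c < u 0 \<omega> then xi b \<omega> else 0)"
    and "expectation (\<lambda>\<omega>. if c < u 0 \<omega> then xi b \<omega> else 0) = prob {x \<in> space M. u 0 x > c} * expectation (xi b)"
proof -
  have "indep_var borel (xi (Inl 0)) borel (xi b)"
    using indep_vars_pair[OF indep_xi _ _ b[symmetric]] by auto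
  then have "indep_var borel ((\<lambda>x. if c < x then 1 else 0 :: real) \<circ> xi (Inl 0)) borel ((\<lambda>x. x) \<circ> xi b)"
    by (rule indep_var_compose) auto
  then have indep_ind: "indep_var borel (\<lambda>\<omega>. if c < u 0 \<omega> then 1 else 0 :: real) borel (xi b)"
    by (simp add: comp_def)
  have eq: "(\<lambda>\<omega>. if c < u 0 \<omega> then xi b \<omega> else 0) = (\<lambda>\<omega>. (if c < u 0 \<omega> then 1 else 0) * xi b \<omega>)"
    by auto
  show "integrable M (\<lambda>\<omega>. if c < u 0 \<omega> then xi b \<omega> else 0)"
    unfolding eq by (rule indep_var_integrable[OF indep_ind exceedance_indicator(1) ib])
  show "expectation (\<lambda>\<omega>. if c < u 0 \<omega> then xi b \<omega> else 0) = prob {x \<in> space M. u 0 x > c} * expectation (xi b)"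
    unfolding eq using indep_var_lebesgue_integral[OF indep_ind exceedance_indicator(1) ib] exceedance_indicator(2) by simp
qed

lemma AE_exceedance_average:
  fixes f :: "real \<Rightarrow> real"
  assumes [measurable]: "f \<in> borel_measurable borel"
    and int: "integrable M (\<lambda>\<omega>. if c < u 0 \<omega> then f (u 0 \<omega>) else 0)"
  shows "AE \<omega> in M. (\<lambda>T. (\<Sum>t<T. if c < u (int t + 1) \<omega> then f (u (int t + 1) \<omega>) else 0) / real T)
     \<longlonglongrightarrow> expectation (\<lambda>\<omega>. if c < u 0 \<omega> then f (u 0 \<omega>) else 0)"
proof -
  define G :: "real \<times> real \<Rightarrow> real" where "G p = (if c < fst p then f (fst p) else 0)" for p
  have G: "G \<in> borel_measurable (borel \<Otimes>\<^sub>M borel)" unfolding G_def by measurable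
  have "AE \<omega> in M. (\<lambda>T. (\<Sum>t<T. G (u (int t + 1) \<omega>, xi (Inr (int t + 1)) \<omega>)) / real T)
            \<longlonglongrightarrow> expectation (\<lambda>\<omega>. G (u 0 \<omega>, xi (Inr 0) \<omega>))"
  proof (rule AE_pair_average_tendsto[OF G, where L=1 and \<rho>=Inr])
    show "distr M borel (xi (Inr t)) = distr M borel (xi (Inr 0))" for t
      using iid_w[of t] by simp
    show "integrable M (\<lambda>\<omega>. G (u 0 \<omega>, xi (Inr 0) \<omega>))"
      using int by (simp add: G_def cong: if_cong)
  qed auto
  then show ?thesis by (simp add: G_def cong: if_cong)
qed

lemma AE_exceedance_cross_average:
  assumes \<rho>: "\<And>t. \<rho> t \<noteq> Inl t" and L: "L > 0"
    and disj: "\<And>t s. t \<noteq> s \<Longrightarrow> int L dvd (t - s) \<Longrightarrow> {Inl t, \<rho> t} \<inter> {Inl s, \<rho> s} = {}"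
    and dr: "\<And>t. distr M borel (xi (\<rho> t)) = distr M borel (xi (\<rho> 0))"
    and int: "integrable M (xi (\<rho> 0))"
  shows "AE \<omega> in M. (\<lambda>T. (\<Sum>t<T. if c < u (int t + 1) \<omega> then xi (\<rho> (int t + 1)) \<omega> else 0) / real T)
     \<longlonglongrightarrow> prob {x \<in> space M. u 0 x > c} * expectation (xi (\<rho> 0))"
proof -
  define G :: "real \<times> real \<Rightarrow> real" where "G p = (if c < fst p then snd p else 0)" for p
  have G: "G \<in> borel_measurable (borel \<Otimes>\<^sub>M borel)" unfolding G_def by measurable
  have "integrable M (\<lambda>\<omega>. G (u 0 \<omega>, xi (\<rho> 0) \<omega>))"
    using exceedance_times_xi(1)[OF \<rho> int] by (simp add: G_def cong: if_cong)
  from AE_pair_average_tendsto[OF G L \<rho> disj dr this]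
  have "AE \<omega> in M. (\<lambda>T. (\<Sum>t<T. G (u (int t + 1) \<omega>, xi (\<rho> (int t + 1)) \<omega>)) / real T)
            \<longlonglongrightarrow> expectation (\<lambda>\<omega>. G (u 0 \<omega>, xi (\<rho> 0) \<omega>))" .
  then show ?thesis using exceedance_times_xi(2)[OF \<rho> int] by (simp add: G_def cong: if_cong)
qed

lemma AE_exceedance_lagged_input_average:
  assumes "integrable M (u 0)"
  shows "AE \<omega> in M. \<forall>m::int. m \<noteq> 0 \<longrightarrow>
    (\<lambda>T. (\<Sum>t<T. if c < u (int t + 1) \<omega> then u (int t + 1 + m) \<omega> else 0) / real T)
      \<longlonglongrightarrow> prob {x \<in> space M. u 0 x > c} * expectation (u 0)"
proof (subst AE_all_countable, intro allI)
  fix m :: int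
  show "AE \<omega> in M. m \<noteq> 0 \<longrightarrow>
    (\<lambda>T. (\<Sum>t<T. if c < u (int t + 1) \<omega> then u (int t + 1 + m) \<omega> else 0) / real T)
      \<longlonglongrightarrow> prob {x \<in> space M. u 0 x > c} * expectation (u 0)"
  proof (cases "m = 0")
    case False
    define L where "L = nat \<bar>m\<bar> + 1"
    have "AE \<omega> in M. (\<lambda>T. (\<Sum>t<T. if c < u (int t + 1) \<omega> then xi (Inl (int t + 1 + m)) \<omega> else 0) / real T)
        \<longlonglongrightarrow> prob {x \<in> space M. u 0 x > c} * expectation (xi (Inl (0 + m)))"
    proof (rule AE_exceedance_cross_average[where \<rho>="\<lambda>t. Inl (t + m)" and L=L])
      show "{Inl t, Inl (t + m)} \<inter> {Inl s, Inl (s + m)} = {}" if "t \<noteq> s" "int L dvd (t - s)" for t s :: int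
      proof -
        have "\<bar>int L\<bar> \<le> \<bar>t - s\<bar>" using that by (intro dvd_imp_le_int) auto
        then have "\<bar>t - s\<bar> > \<bar>m\<bar>" unfolding L_def by simp
        with \<open>t \<noteq> s\<close> show ?thesis by auto
      qed
      show "distr M borel (xi (Inl (t + m))) = distr M borel (xi (Inl (0 + m)))" for t
        using iid_u[of "t + m"] iid_u[of m] by simp
      show "integrable M (xi (Inl (0 + m)))"
        using integrable_u_iff assms by simp
    qed (use False in \<open>auto simp: L_def\<close>)
    moreover have "expectation (u m) = expectation (u 0)"
      by (rule expectation_u)
    ultimately show ?thesis by (simp cong: if_cong)
  qed simp
qed

lemma AE_exceedance_noise_average:
  assumes "integrable M (w 0)"
  shows "AE \<omega> in M. \<forall>n::int.
    (\<lambda>T. (\<Sum>t<T. if c < u (int t + 1) \<omega> then w (int t + 1 + n) \<omega> else 0) / real T)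
      \<longlonglongrightarrow> prob {x \<in> space M. u 0 x > c} * expectation (w 0)"
proof (subst AE_all_countable, intro allI)
  fix n :: int
  have "AE \<omega> in M. (\<lambda>T. (\<Sum>t<T. if c < u (int t + 1) \<omega> then xi (Inr (int t + 1 + n)) \<omega> else 0) / real T)
      \<longlonglongrightarrow> prob {x \<in> space M. u 0 x > c} * expectation (xi (Inr (0 + n)))"
  proof (rule AE_exceedance_cross_average[where \<rho>="\<lambda>t. Inr (t + n)" and L=1])
    show "distr M borel (xi (Inr (t + n))) = distr M borel (xi (Inr (0 + n)))" for t
      using iid_w[of "t + n"] iid_w[of n] by simp
    show "integrable M (xi (Inr (0 + n)))"
      using integrable_w_iff assms by simp
  qed auto
  moreover have "expectation (w n) = expectation (w 0)"
    by (rule expectation_w)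
  ultimately show "AE \<omega> in M. (\<lambda>T. (\<Sum>t<T. if c < u (int t + 1) \<omega> then w (int t + 1 + n) \<omega> else 0) / real T)
      \<longlonglongrightarrow> prob {x \<in> space M. u 0 x > c} * expectation (w 0)"
    by (simp cong: if_cong)
qed

end

section \<open>Averages over hitting times\<close>

lemma sum_if_Suc_mem_eq_sum_Int:
  fixes g :: "nat \<Rightarrow> real"
  shows "(\<Sum>t<T. if Suc t \<in> S then g (Suc t) else 0) = (\<Sum>s\<in>S \<inter> {1..T}. g s)"
proof (induction T)
  case 0 then show ?case by simp
next
  case (Suc T)
  have "S \<inter> {1..Suc T} = (S \<inter> {1..T}) \<union> (if Suc T \<in> S then {Suc T} else {})"
    by (auto simp: le_Suc_eq)
  then show ?case using Suc by (auto simp: sum.union_disjoint)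
qed

lemma Int_atLeastAtMost_enumerate:
  fixes S :: "nat set"
  assumes inf: "infinite S" and S1: "\<And>t. t \<in> S \<Longrightarrow> 1 \<le> t"
  shows "S \<inter> {1..enumerate S j} = enumerate S ` {..<Suc j}"
proof
  have sm: "strict_mono (enumerate S)" by (rule strict_mono_enumerate[OF inf])
  show "S \<inter> {1..enumerate S j} \<subseteq> enumerate S ` {..<Suc j}"
  proof
    fix s assume s: "s \<in> S \<inter> {1..enumerate S j}"
    then obtain k where k: "enumerate S k = s" using enumerate_Ex[OF inf] by blast
    then have "k \<le> j" using s sm by (auto simp: strict_mono_less_eq)
    then show "s \<in> enumerate S ` {..<Suc j}" using k by auto
  qed
  show "enumerate S ` {..<Suc j} \<subseteq> S \<inter> {1..enumerate S j}"
    using enumerate_in_set[OF inf] S1 sm by (auto simp: strict_mono_less_eq)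
qed

definition hit_average :: "nat set \<Rightarrow> (nat \<Rightarrow> real) \<Rightarrow> nat \<Rightarrow> real" where
  "hit_average S f i = (1 / real i) * (\<Sum>i'=1..i. f (enumerate S (i' - 1)))"

text \<open>Averages over the successive elements of \<open>S\<close> are ratios of time averages, evaluated along the
  subsequence of hitting times.\<close>

lemma hit_average_tendsto:
  fixes S :: "nat set" and f :: "nat \<Rightarrow> real"
  assumes inf: "infinite S" and S1: "\<And>t. t \<in> S \<Longrightarrow> 1 \<le> t"
    and avg: "(\<lambda>T. (\<Sum>t<T. if Suc t \<in> S then f (Suc t) else 0) / real T) \<longlonglongrightarrow> a"
    and freq: "(\<lambda>T. (\<Sum>t<T. if Suc t \<in> S then 1 else 0) / real T) \<longlonglongrightarrow> p" and p: "p > 0"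
  shows "(\<lambda>i. hit_average S f i) \<longlonglongrightarrow> a / p"
proof -
  define e where "e = enumerate S"
  have mono_e: "strict_mono e" unfolding e_def by (rule strict_mono_enumerate[OF inf])
  have e_lim: "filterlim e at_top sequentially" by (rule filterlim_subseq[OF mono_e])
  have epos: "real (e j) > 0" for j using S1[OF enumerate_in_set[OF inf, of j]] unfolding e_def by simp
  have inj_e: "inj_on e X" for X using strict_mono_imp_inj_on[OF mono_e] by (auto intro: inj_on_subset)
  have sum_to_hit: "(\<Sum>t<e j. if Suc t \<in> S then g (Suc t) else 0) = (\<Sum>k<Suc j. g (e k))" for g :: "nat \<Rightarrow> real" and j
  proof -
    have hits_upto: "S \<inter> {1..e j} = e ` {..<Suc j}" unfolding e_def by (rule Int_atLeastAtMost_enumerate[OF inf S1])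
    show ?thesis unfolding sum_if_Suc_mem_eq_sum_Int hits_upto using inj_e by (subst sum.reindex) auto
  qed
  have avg_hits: "(\<lambda>j. (\<Sum>t<e j. if Suc t \<in> S then f (Suc t) else 0) / real (e j)) \<longlonglongrightarrow> a"
    using filterlim_compose[OF avg e_lim] .
  have freq_hits: "(\<lambda>j. (\<Sum>t<e j. if Suc t \<in> S then 1 else 0) / real (e j)) \<longlonglongrightarrow> p"
    using filterlim_compose[OF freq e_lim] .
  have "(\<lambda>j. ((\<Sum>t<e j. if Suc t \<in> S then f (Suc t) else 0) / real (e j)) / ((\<Sum>t<e j. if Suc t \<in> S then 1 else 0) / real (e j))) \<longlonglongrightarrow> a / p"
    using p by (intro tendsto_divide avg_hits freq_hits) auto
  moreover have "((\<Sum>t<e j. if Suc t \<in> S then f (Suc t) else 0) / real (e j)) / ((\<Sum>t<e j. if Suc t \<in> S then 1 else 0) / real (e j))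
      = (1 / real (Suc j)) * (\<Sum>i'=1..Suc j. f (enumerate S (i' - 1)))" for j
  proof -
    have "(\<Sum>i'=1..Suc j. f (enumerate S (i' - 1))) = (\<Sum>k<Suc j. f (e k))"
      unfolding e_def by (simp only: One_nat_def sum.shift_bounds_cl_Suc_ivl) (simp add: atLeast0AtMost lessThan_Suc_atMost)
    moreover have "(\<Sum>t<e j. if Suc t \<in> S then (1::real) else 0) = real (Suc j)"
      using sum_to_hit[of "\<lambda>_. 1" j] by simp
    ultimately show ?thesis using epos[of j] sum_to_hit[of f j] by simp
  qed
  ultimately have "(\<lambda>j. (1 / real (Suc j)) * (\<Sum>i'=1..Suc j. f (enumerate S (i' - 1)))) \<longlonglongrightarrow> a / p" by simp
  then show ?thesis unfolding hit_average_def[abs_def] by (rule LIMSEQ_imp_Suc)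
qed


lemma infinite_of_positive_frequency:
  fixes S :: "nat set"
  assumes freq: "(\<lambda>T. (\<Sum>t<T. if Suc t \<in> S then 1 else 0) / real T) \<longlonglongrightarrow> p" and p: "p > 0"
  shows "infinite S"
proof
  assume fin: "finite S"
  have le: "(\<Sum>t<T. if Suc t \<in> S then 1 else 0) \<le> real (card S)" for T
  proof -
    have "(\<Sum>t<T. if Suc t \<in> S then 1 else 0) = (\<Sum>s\<in>S \<inter> {1..T}. (1::real))"
      using sum_if_Suc_mem_eq_sum_Int[where g="\<lambda>_. 1" and T=T and S=S] by simp
    also have "\<dots> = real (card (S \<inter> {1..T}))" by simp
    also have "\<dots> \<le> real (card S)" using fin by (simp add: card_mono)
    finally show ?thesis .
  qed
  have z: "(\<lambda>T. real (card S) / real T) \<longlonglongrightarrow> 0"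
    by (intro tendsto_divide_0[OF tendsto_const] filterlim_at_top_imp_at_infinity filterlim_real_sequentially)
  have "(\<lambda>T. (\<Sum>t<T. if Suc t \<in> S then 1 else 0) / real T) \<longlonglongrightarrow> 0"
  proof (rule tendsto_sandwich[OF _ _ tendsto_const z])
    show "eventually (\<lambda>T. 0 \<le> (\<Sum>t<T. if Suc t \<in> S then 1 else 0) / real T) sequentially"
      by (intro always_eventually allI divide_nonneg_nonneg sum_nonneg) auto
    show "eventually (\<lambda>T. (\<Sum>t<T. if Suc t \<in> S then 1 else 0) / real T \<le> real (card S) / real T) sequentially"
      using le by (intro always_eventually allI divide_right_mono) auto
  qed
  with freq have "p = 0" by (rule LIMSEQ_unique)
  with p show False by simp
qed

section \<open>Convergence of the estimator\<close>

definition diag_plus_const_mat :: "nat \<Rightarrow> real \<Rightarrow> real \<Rightarrow> real mat" where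
  "diag_plus_const_mat N a b = mat N N (\<lambda>(i, j). (if i = j then a else 0) + b)"

lemma Umat_eq_diag_plus_const_mat: "Umat N m0 m1 = diag_plus_const_mat N (m1 - m0) m0"
  unfolding Umat_def diag_plus_const_mat_def by (rule eq_matI) auto

lemma one_mat_eq_diag_plus_const_mat: "1\<^sub>m N = diag_plus_const_mat N 1 0"
  unfolding diag_plus_const_mat_def by (rule eq_matI) auto

lemma mult_diag_plus_const_mat:
  "diag_plus_const_mat N a b * diag_plus_const_mat N a' b'
     = diag_plus_const_mat N (a * a') (a * b' + b * a' + real N * b * b')"
proof (rule eq_matI)
  fix i j assume "i < dim_row (diag_plus_const_mat N (a * a') (a * b' + b * a' + real N * b * b'))"
    "j < dim_col (diag_plus_const_mat N (a * a') (a * b' + b * a' + real N * b * b'))"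
  then have ij: "i < N" "j < N" by (simp_all add: diag_plus_const_mat_def)
  have "(diag_plus_const_mat N a b * diag_plus_const_mat N a' b') $$ (i, j)
      = (\<Sum>k<N. ((if i = k then a else 0) + b) * ((if k = j then a' else 0) + b'))"
    using ij by (simp add: diag_plus_const_mat_def scalar_prod_def atLeast0LessThan)
  also have "\<dots> = (\<Sum>k<N. (if k = i then (if i = j then a * a' else 0) else 0)
      + (if k = i then a * b' else 0) + (if k = j then b * a' else 0) + b * b')"
    by (intro sum.cong) (auto simp: algebra_simps)
  also have "\<dots> = (if i = j then a * a' else 0) + (a * b' + b * a' + real N * b * b')"
    using ij by (simp add: sum.distrib)
  finally show "(diag_plus_const_mat N a b * diag_plus_const_mat N a' b') $$ (i, j)
      = diag_plus_const_mat N (a * a') (a * b' + b * a' + real N * b * b') $$ (i, j)"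
    using ij by (simp add: diag_plus_const_mat_def)
qed (simp_all add: diag_plus_const_mat_def)

text \<open>\<open>Umat N m0 m1 = d I + m0 J\<close> with \<open>d = m1 - m0\<close> and \<open>J\<close> the all-ones matrix; its inverse is
  \<open>I / d - q J\<close> with \<open>q = m0 / (d (d + N m0))\<close>, defined because of the two hypotheses.\<close>

lemma Umat_inverse:
  fixes m0 m1 :: real
  assumes "m1 \<noteq> m0" and "m1 \<noteq> (1 - real N) * m0"
  shows "\<exists>B. mat_inverse (Umat N m0 m1) = Some B \<and> B * Umat N m0 m1 = 1\<^sub>m N \<and> B \<in> carrier_mat N N"
proof -
  define d where "d = m1 - m0"
  define q where "q = m0 / (d * (d + real N * m0))"
  define V where "V = diag_plus_const_mat N (1 / d) (- q)"
  have d: "d \<noteq> 0" and s: "d + real N * m0 \<noteq> 0"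
    using assms unfolding d_def by (auto simp: algebra_simps)
  have U: "Umat N m0 m1 \<in> carrier_mat N N" and V: "V \<in> carrier_mat N N"
    unfolding Umat_def V_def diag_plus_const_mat_def by simp_all
  have "q * (d + real N * m0) = m0 / d"
    unfolding q_def divide_divide_eq_left[symmetric] using s by simp
  moreover have "d * - q + m0 * (1 / d) + real N * m0 * - q = m0 / d - q * (d + real N * m0)"
    by (simp add: algebra_simps)
  ultimately have coeff: "d * - q + m0 * (1 / d) + real N * m0 * - q = 0" by simp
  have "Umat N m0 m1 * V = 1\<^sub>m N" "V * Umat N m0 m1 = 1\<^sub>m N"
    unfolding Umat_eq_diag_plus_const_mat V_def mult_diag_plus_const_mat one_mat_eq_diag_plus_const_mat
    using d coeff by (simp_all add: d_def[symmetric] algebra_simps)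
  then have "Umat N m0 m1 \<in> Units (ring_mat TYPE(real) N undefined)"
    using U V unfolding Units_def ring_mat_def by auto
  then obtain B where B: "mat_inverse (Umat N m0 m1) = Some B"
    using mat_inverse(1)[OF U, of undefined] by (cases "mat_inverse (Umat N m0 m1)") auto
  show ?thesis using mat_inverse(2)[OF U B] B by blast
qed

lemma tendsto_mult_mat_vec_nth:
  fixes B :: "real mat" and f :: "nat \<Rightarrow> nat \<Rightarrow> real"
  assumes B: "B \<in> carrier_mat N N" and lim: "\<And>k. k < N \<Longrightarrow> (\<lambda>j. f j k) \<longlonglongrightarrow> g k" and i: "i < N"
  shows "(\<lambda>j. (B *\<^sub>v vec N (\<lambda>k. f j k)) $ i) \<longlonglongrightarrow> (B *\<^sub>v vec N g) $ i"
proof -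
  have e: "(B *\<^sub>v vec N h) $ i = (\<Sum>k\<in>{0..<N}. B $$ (i, k) * h k)" for h
    using B i by (simp add: scalar_prod_def)
  show ?thesis unfolding e
    by (intro tendsto_sum tendsto_mult tendsto_const lim) auto
qed

lemma Umat_mult_vec_nth:
  fixes b :: "nat \<Rightarrow> real"
  assumes k: "k < N"
  shows "(Umat N m0 m1 *\<^sub>v vec N (\<lambda>k. b (k + 1))) $ k = (\<Sum>l=1..N. b l * (if l = k + 1 then m1 else m0))"
proof -
  have "(Umat N m0 m1 *\<^sub>v vec N (\<lambda>k. b (k + 1))) $ k = (\<Sum>j\<in>{0..<N}. (if k = j then m1 else m0) * b (j + 1))"
    using k by (simp add: Umat_def scalar_prod_def)
  also have "\<dots> = (\<Sum>j\<in>{0..<N}. b (Suc j) * (if Suc j = k + 1 then m1 else m0))"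
    by (intro sum.cong) auto
  also have "\<dots> = (\<Sum>l=1..N. b l * (if l = k + 1 then m1 else m0))"
    using sum.shift_bounds_Suc_ivl[of "\<lambda>l. b l * (if l = k + 1 then m1 else m0)" 0 N]
    by (simp add: atLeastLessThanSuc_atLeastAtMost)
  finally show ?thesis .
qed

lemma inverse_Umat_mult_vec_tendsto:
  fixes f :: "nat \<Rightarrow> nat \<Rightarrow> real" and b :: "nat \<Rightarrow> real"
  assumes B: "B * Umat N m0 m1 = 1\<^sub>m N" "B \<in> carrier_mat N N"
    and lim: "\<And>k. k < N \<Longrightarrow> (\<lambda>j. f j k) \<longlonglongrightarrow> (\<Sum>l=1..N. b l * (if l = k + 1 then m1 else m0))"
    and n: "n \<in> {1..N}"
  shows "(\<lambda>j. (B *\<^sub>v vec N (f j)) $ (n - 1)) \<longlonglongrightarrow> b n"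
proof -
  have U: "Umat N m0 m1 \<in> carrier_mat N N" by (simp add: Umat_def)
  have "vec N (\<lambda>k. \<Sum>l=1..N. b l * (if l = k + 1 then m1 else m0)) = Umat N m0 m1 *\<^sub>v vec N (\<lambda>k. b (k + 1))"
  proof (rule eq_vecI)
    fix k assume "k < dim_vec (Umat N m0 m1 *\<^sub>v vec N (\<lambda>k. b (k + 1)))"
    then have "k < N" using U by simp
    then show "vec N (\<lambda>k. \<Sum>l=1..N. b l * (if l = k + 1 then m1 else m0)) $ k
        = (Umat N m0 m1 *\<^sub>v vec N (\<lambda>k. b (k + 1))) $ k"
      by (simp only: Umat_mult_vec_nth index_vec)
  qed (use U in simp)
  then have "B *\<^sub>v vec N (\<lambda>k. \<Sum>l=1..N. b l * (if l = k + 1 then m1 else m0)) = vec N (\<lambda>k. b (k + 1))"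
    using B U by (simp add: assoc_mult_mat_vec[symmetric])
  moreover have "(\<lambda>j. (B *\<^sub>v vec N (f j)) $ (n - 1))
      \<longlonglongrightarrow> (B *\<^sub>v vec N (\<lambda>k. \<Sum>l=1..N. b l * (if l = k + 1 then m1 else m0))) $ (n - 1)"
    using n by (intro tendsto_mult_mat_vec_nth[OF B(2)] lim) auto
  ultimately show ?thesis using n by (cases n) auto
qed

lemma davg_eq_hit_averages:
  fixes u w :: "int \<Rightarrow> 'a \<Rightarrow> real" and c :: real and \<omega> :: 'a
  defines "S \<equiv> {t::nat. 1 \<le> t \<and> u (int t) \<omega> > c}"
  shows "davg b N u w c n i \<omega> =
     (\<Sum>k=1..N. b k * hit_average S (\<lambda>s. u (int s + (int n - int k)) \<omega>) i)
     + hit_average S (\<lambda>s. w (int s + int n) \<omega>) i"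
  unfolding davg_def fir_out_def hit_average_def tau_def S_def
  by (simp add: sum.distrib sum_distrib_left distrib_left sum.swap[of _ "{1..i}"] mult.left_commute
      add_diff_eq) (rule sum.swap)

lemma davg_tendsto_of_exceedance_averages:
  fixes u w :: "int \<Rightarrow> 'a \<Rightarrow> real"
  assumes p: "p > 0"
    and freq: "(\<lambda>T. (\<Sum>t<T. if c < u (int t + 1) \<omega> then 1 else 0) / real T) \<longlonglongrightarrow> p"
    and input: "(\<lambda>T. (\<Sum>t<T. if c < u (int t + 1) \<omega> then u (int t + 1) \<omega> else 0) / real T) \<longlonglongrightarrow> p * m1"
    and lagged: "\<And>m. m \<noteq> 0 \<Longrightarrow>
      (\<lambda>T. (\<Sum>t<T. if c < u (int t + 1) \<omega> then u (int t + 1 + m) \<omega> else 0) / real T) \<longlonglongrightarrow> p * m0"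
    and noise: "\<And>m. (\<lambda>T. (\<Sum>t<T. if c < u (int t + 1) \<omega> then w (int t + 1 + m) \<omega> else 0) / real T) \<longlonglongrightarrow> 0"
  shows "(\<lambda>i. davg b N u w c n i \<omega>) \<longlonglongrightarrow> (\<Sum>k=1..N. b k * (if k = n then m1 else m0))"
proof -
  define S where "S = {t::nat. 1 \<le> t \<and> u (int t) \<omega> > c}"
  have hit: "Suc t \<in> S \<longleftrightarrow> c < u (int t + 1) \<omega>" for t
    unfolding S_def by (simp add: add.commute)
  have freq_S: "(\<lambda>T. (\<Sum>t<T. if Suc t \<in> S then 1 else 0) / real T) \<longlonglongrightarrow> p"
    using freq unfolding hit .
  have hit_avg: "(\<lambda>i. hit_average S f i) \<longlonglongrightarrow> a / p"
    if "(\<lambda>T. (\<Sum>t<T. if c < u (int t + 1) \<omega> then f (Suc t) else 0) / real T) \<longlonglongrightarrow> a" for f a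
    using that unfolding hit[symmetric]
    by (intro hit_average_tendsto[OF infinite_of_positive_frequency[OF freq_S p] _ _ freq_S p])
      (auto simp: S_def)
  have hit_input: "(\<lambda>i. hit_average S (\<lambda>s. u (int s + m) \<omega>) i) \<longlonglongrightarrow> (if m = 0 then m1 else m0)" for m
  proof (cases "m = 0")
    case True
    have "(\<lambda>T. (\<Sum>t<T. if c < u (int t + 1) \<omega> then u (int (Suc t) + m) \<omega> else 0) / real T) \<longlonglongrightarrow> p * m1"
      using input True by (simp add: add.commute cong: if_cong)
    from hit_avg[OF this] show ?thesis using True p by simp
  next
    case False
    have "(\<lambda>T. (\<Sum>t<T. if c < u (int t + 1) \<omega> then u (int (Suc t) + m) \<omega> else 0) / real T) \<longlonglongrightarrow> p * m0"
      using lagged[OF False] by (simp add: add_ac cong: if_cong)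
    from hit_avg[OF this] show ?thesis using False p by simp
  qed
  have hit_noise: "(\<lambda>i. hit_average S (\<lambda>s. w (int s + m) \<omega>) i) \<longlonglongrightarrow> 0" for m
  proof -
    have "(\<lambda>T. (\<Sum>t<T. if c < u (int t + 1) \<omega> then w (int (Suc t) + m) \<omega> else 0) / real T) \<longlonglongrightarrow> 0"
      using noise[of m] by (simp add: add_ac cong: if_cong)
    from hit_avg[OF this] show ?thesis by simp
  qed
  have "(\<lambda>i. (\<Sum>k=1..N. b k * hit_average S (\<lambda>s. u (int s + (int n - int k)) \<omega>) i)
      + hit_average S (\<lambda>s. w (int s + int n) \<omega>) i)
      \<longlonglongrightarrow> (\<Sum>k=1..N. b k * (if int n - int k = 0 then m1 else m0)) + 0"
    by (intro tendsto_add tendsto_sum tendsto_mult tendsto_const hit_input hit_noise)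
  then show ?thesis
    unfolding davg_eq_hit_averages S_def[symmetric] by (simp add: eq_commute[of n])
qed

lemma (in fir) AE_davg_tendsto:
  assumes "integrable M (u 0)" and "integrable M (w 0)" and "expectation (w 0) = 0"
    and exceed: "prob {x \<in> space M. u 0 x > c} > 0"
  shows "AE \<omega> in M. \<forall>n. (\<lambda>i. davg b N u w c n i \<omega>)
    \<longlonglongrightarrow> (\<Sum>k=1..N. b k * (if k = n then cond_exp_above M (u 0) c else expectation (u 0)))"
proof -
  define p where "p = prob {x \<in> space M. u 0 x > c}"
  have "AE \<omega> in M. (\<lambda>T. (\<Sum>t<T. if c < u (int t + 1) \<omega> then 1 else 0) / real T) \<longlonglongrightarrow> p"
    using AE_exceedance_average[OF borel_measurable_const, of c 1] exceedance_indicator unfolding p_def by simp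
  moreover have "AE \<omega> in M. (\<lambda>T. (\<Sum>t<T. if c < u (int t + 1) \<omega> then u (int t + 1) \<omega> else 0) / real T)
    \<longlonglongrightarrow> p * cond_exp_above M (u 0) c"
  proof -
    have "integrable M (\<lambda>\<omega>. if c < u 0 \<omega> then u 0 \<omega> else 0)"
      by (rule Bochner_Integration.integrable_bound[OF assms(1)]) auto
    moreover have "expectation (\<lambda>\<omega>. if c < u 0 \<omega> then u 0 \<omega> else 0) = p * cond_exp_above M (u 0) c"
      using exceed unfolding p_def cond_exp_above_def
      by (auto intro: Bochner_Integration.integral_cong simp: indicator_def)
    ultimately show ?thesis using AE_exceedance_average[OF measurable_ident_sets[OF refl], of c] by simp
  qed
  moreover note AE_exceedance_lagged_input_average[OF assms(1), where c=c]
    AE_exceedance_noise_average[OF assms(2), where c=c]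
  ultimately show ?thesis
    unfolding p_def[symmetric]
  proof eventually_elim
    case (elim \<omega>)
    have noise: "(\<lambda>T. (\<Sum>t<T. if c < u (int t + 1) \<omega> then w (int t + 1 + m) \<omega> else 0) / real T) \<longlonglongrightarrow> 0"
      for m using elim(4) assms(3) by simp
    show ?case
      using davg_tendsto_of_exceedance_averages[where u=u and w=w and c=c and \<omega>=\<omega>,
          OF exceed[folded p_def] elim(1,2) elim(3)[rule_format] noise]
      by blast
  qed
qed

theorem theorem3:
  fixes M :: "'a measure"
    and u w :: "int \<Rightarrow> 'a \<Rightarrow> real"
    and b :: "nat \<Rightarrow> real" and N :: nat and c :: real
    and \<alpha> :: "nat \<Rightarrow> real" and sg :: "real \<Rightarrow> real"
  assumes "prob_space M"
    and "N \<ge> 1"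
    and meas: "\<And>t. u t \<in> borel_measurable M" "\<And>t. w t \<in> borel_measurable M"
    and indep: "prob_space.indep_vars M (\<lambda>_. borel)
                  (\<lambda>i. case i of Inl t \<Rightarrow> u t | Inr t \<Rightarrow> w t) (UNIV :: (int + int) set)"
    and iid_u: "\<And>t. distr M borel (u t) = distr M borel (u 0)"
    and iid_w: "\<And>t. distr M borel (w t) = distr M borel (w 0)"
    and "integrable M (w 0)" and "(\<integral>x. w 0 x \<partial>M) = 0"
    and "integrable M (u 0)"
    and "measure M {x \<in> space M. u 0 x > c} > 0"
    and "cond_exp_above M (u 0) c \<noteq> (\<integral>x. u 0 x \<partial>M)"
    and "cond_exp_above M (u 0) c \<noteq> (1 - real N) * (\<integral>x. u 0 x \<partial>M)"
    and "\<And>j. j \<ge> 1 \<Longrightarrow> \<alpha> j > 0"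
    and "\<not> summable \<alpha>"
    and "summable (\<lambda>j. (\<alpha> j)\<^sup>2)"
    and "\<And>x. x < 0 \<Longrightarrow> sg x = -1"
    and "\<And>x. x > 0 \<Longrightarrow> sg x = 1"
  shows "AE \<omega> in M. \<forall>n\<in>{1..N}.
           (\<lambda>j. bhat b N u w c (\<integral>x. u 0 x \<partial>M) (cond_exp_above M (u 0) c) \<alpha> sg j \<omega> $ (n - 1))
             \<longlonglongrightarrow> b n"
proof -
  interpret fir M u w
    using assms(1) indep iid_u iid_w by (simp add: fir_def fir_axioms_def)
  obtain B where B: "mat_inverse (Umat N (\<integral>x. u 0 x \<partial>M) (cond_exp_above M (u 0) c)) = Some B"
      "B * Umat N (\<integral>x. u 0 x \<partial>M) (cond_exp_above M (u 0) c) = 1\<^sub>m N" "B \<in> carrier_mat N N"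
    using Umat_inverse[OF assms(12,13)] by blast
  have \<alpha>: "\<alpha> \<longlonglongrightarrow> 0" by (rule tendsto_0_of_summable_power2[OF assms(16)])
  have N: "filterlim (\<lambda>l. N * l) at_top sequentially"
    using assms(2) by (intro filterlim_subseq) (auto simp: strict_mono_def)
  from AE_davg_tendsto[OF assms(10,8,9,11), of b N] show ?thesis
  proof (rule AE_mp[OF _ AE_I2], intro impI ballI)
    fix \<omega> n
    assume davg: "\<forall>n. (\<lambda>i. davg b N u w c n i \<omega>)
      \<longlonglongrightarrow> (\<Sum>k=1..N. b k * (if k = n then cond_exp_above M (u 0) c else expectation (u 0)))"
      and n: "n \<in> {1..N}"
    show "(\<lambda>j. bhat b N u w c (\<integral>x. u 0 x \<partial>M) (cond_exp_above M (u 0) c) \<alpha> sg j \<omega> $ (n - 1)) \<longlonglongrightarrow> b n"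
      unfolding bhat_def B(1) option.sel
    proof (rule inverse_Umat_mult_vec_tendsto[OF B(2,3) _ n])
      fix k
      show "(\<lambda>j. dhat \<alpha> sg (\<lambda>l. davg b N u w c (k + 1) (N * l) \<omega>) j)
        \<longlonglongrightarrow> (\<Sum>l=1..N. b l * (if l = k + 1 then cond_exp_above M (u 0) c else expectation (u 0)))"
        by (rule dhat_tendsto[OF filterlim_compose[OF davg[rule_format] N] \<alpha> assms(14,15,17,18)])
    qed
  qed
qed

end
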